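(* Let $\Omega$, $T_0>0$, $T_w$, $r_\perp,r_\parallel$ be as in the context and assume $\sup_{x\in\partial\Omega}|T_w(x)-T_0|<\delta_0$ and $\max\{|1-r_\perp|,|1-r_\parallel|\}<\delta_0$ with $\delta_0>0$ sufficiently small. For $x_1\in\partial\Omega$ and $v\in\mathbb{R}^3$ set $$\mathcal{A}:=\frac{2}{r_\perp r_\parallel(2-r_\parallel)\pi}\frac{1}{(2T_w(x_1))^2}e^{[\frac{1}{4T_0}-\frac{1}{2T_w(x_1)}]|v|^2},$$ and for $v_1\in\mathbb{R}^3$ with $n(x_1)\cdot v_1>0$, $$\mathcal{B}(v_1):=e^{-[\frac{1}{4T_0}-\frac{1}{2T_w(x_1)}]|v_1|^2}(n(x_1)\cdot v_1)\,I_0\Big(\frac{(1-r_\perp)^{1/2}v_{1,\perp}v_\perp}{r_\perp T_w(x_1)}\Big)\exp\Big(-\frac{1}{2T_w(x_1)}\Big[\frac{|v_{1,\perp}|^2+(1-r_\perp)|v_\perp|^2}{r_\perp}+\frac{|v_{1,\parallel}-(1-r_\parallel)v_\parallel|^2}{r_\parallel(2-r_\parallel)}\Big]\Big).$$ Then, uniformly in $x_1\in\partial\Omega$ and $v\in\mathbb{R}^3$, $$\mathcal{A}\int_{n(x_1)\cdot v_1>0}[1+|v_1|^2+|v|^2]\,\mathcal{B}(v_1)\,dv_1\lesssim1,\qquad \mathcal{A}\int_{n(x_1)\cdot v_1>0}\frac{\mathcal{B}(v_1)}{\alpha(x_1,v_1)}\,dv_1\lesssim1,$$ $$\mathcal{A}\int_{n(x_1)\cdot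 v_1>0}[1+|v_1|]\,|\nabla_{v_1}\mathcal{B}(v_1)|\,dv_1\lesssim1,$$ and, writing $x_1=\eta_{p^1}(\mathbf{x}^1_{p^1})$ in a boundary chart, for $i=1,2$, $$\big|\partial_{\mathbf{x}^1_{p^1,i}}\mathcal{A}\big|\int_{n(x_1)\cdot v_1>0}\mathcal{B}(v_1)\,dv_1\lesssim1.$$
   Context: $\Omega=\{\xi<0\}\subset\mathbb{R}^3$ bounded, $\xi\in C^2$, strictly convex ($\sum\zeta_i\zeta_j\partial_{ij}\xi\gtrsim|\zeta|^2$), $\nabla\xi\ne0$ near $\partial\Omega$; $n(x)$ outward normal. $T_w:\partial\Omega\to(0,\infty)$ is the wall temperature (of class $C^1$ along the boundary), $r_\perp,r_\parallel$ accommodation coefficients. For $x_1\in\partial\Omega$: $v_\perp=v\cdot n(x_1)$, $v_\parallel=v-v_\perp n(x_1)$, and likewise $v_{1,\perp},v_{1,\parallel}$. $I_0(y)=\pi^{-1}\int_0^\pi e^{y\cos\phi}d\phi$. Kinetic distance $\alpha(x,v)=\chi_\varepsilon(\sqrt{|v\cdot\nabla\xi(x)|^2-2\xi(x)(v\cdot\nabla^2\xi(x)\cdot v)})$ with fixed small $\varepsilon>0$ and $\chi_a$ nondecreasing smooth, $\chi_a(s)=s$ on $[0,a]$, $\chi_a(s)=2a$ on $[4a,\infty)$, $|\chi_a'|\le1$. Boundary charts: for $p$ in a finite set $\mathcal{P}\subset\partial\Omega$, $\eta_p:B_+(0;\delta_1)\to\bar\Omega$ is a $C^2$ one-to-one parametrization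 of a neighborhood of $p$ with $\eta_p(\mathbf{x}_p)\in\partial\Omega$ iff $\mathbf{x}_{p,3}=0$, and $\partial_{\mathbf{x}_{p,i}}\eta_p$ mutually orthogonal at $\mathbf{x}_{p,3}=0$; boundary points are written $x_1=\eta_{p^1}(\mathbf{x}^1_{p^1,1},\mathbf{x}^1_{p^1,2},0)$, and $\partial_{\mathbf{x}^1_{p^1,i}}\mathcal{A}$ is the derivative of $\mathcal{A}$ (through $T_w(x_1)$) with respect to that coordinate. The implicit constants in $\lesssim$ may depend on $T_0$, $\Omega$ and $T_w$ but not on $x_1,v$. *)

theory Defs
  imports "HOL-Analysis.Analysis"
begin

definition I0 :: "real \<Rightarrow> real" where
  "I0 y = (1 / pi) * integral {0..pi} (\<lambda>\<phi>. exp (y * cos \<phi>))"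

definition C1_on :: "'a::real_normed_vector set \<Rightarrow> ('a \<Rightarrow> 'b::real_normed_vector) \<Rightarrow> bool" where
  "C1_on S f \<longleftrightarrow> (\<exists>f'. (\<forall>x\<in>S. (f has_derivative blinfun_apply (f' x)) (at x)) \<and> continuous_on S f')"

definition C2_on :: "'a::real_normed_vector set \<Rightarrow> ('a \<Rightarrow> 'b::real_normed_vector) \<Rightarrow> bool" where
  "C2_on S f \<longleftrightarrow> (\<exists>f'. (\<forall>x\<in>S. (f has_derivative blinfun_apply (f' x)) (at x)) \<and> C1_on S f')"

definition half_ball :: "real \<Rightarrow> (real^3) set" where
  "half_ball d = {x. norm x < d \<and> x$3 \<ge> 0}"

definition half_cball :: "real \<Rightarrow> (real^3) set" where
  "half_cball d = {x. norm x \<le> d \<and> x$3 \<ge> 0}"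

definition nrm :: "(real^3 \<Rightarrow> real^3) \<Rightarrow> real^3 \<Rightarrow> real^3" where
  "nrm gxi x = (1 / norm (gxi x)) *\<^sub>R gxi x"

text \<open>The coefficient A; tw stands for T_w(x_1).\<close>
definition Acoef :: "real \<Rightarrow> real \<Rightarrow> real \<Rightarrow> real \<Rightarrow> real^3 \<Rightarrow> real" where
  "Acoef T0 rperp rpar tw v =
     2 / (rperp * rpar * (2 - rpar) * pi) * (1 / (2 * tw)^2)
     * exp ((1 / (4 * T0) - 1 / (2 * tw)) * (norm v)^2)"

text \<open>The function B(v_1); n is the normal n(x_1), tw stands for T_w(x_1).\<close>
definition Bfun :: "real \<Rightarrow> real \<Rightarrow> real \<Rightarrow> real \<Rightarrow> real^3 \<Rightarrow> real^3 \<Rightarrow> real^3 \<Rightarrow> real" where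
  "Bfun T0 rperp rpar tw n v v1 =
     (let vperp = v \<bullet> n; vpar = v - vperp *\<^sub>R n;
          v1perp = v1 \<bullet> n; v1par = v1 - v1perp *\<^sub>R n
      in exp (- (1 / (4 * T0) - 1 / (2 * tw)) * (norm v1)^2) * (n \<bullet> v1)
         * I0 (sqrt (1 - rperp) * v1perp * vperp / (rperp * tw))
         * exp (- (1 / (2 * tw)) *
              (((\<bar>v1perp\<bar>)^2 + (1 - rperp) * (\<bar>vperp\<bar>)^2) / rperp
               + (norm (v1par - (1 - rpar) *\<^sub>R vpar))^2 / (rpar * (2 - rpar)))))"

text \<open>Kinetic distance alpha(x,v); gxi = grad xi, hxi = Hessian of xi.\<close>
definition kin_alpha :: "(real \<Rightarrow> real) \<Rightarrow> (real^3 \<Rightarrow> real) \<Rightarrow> (real^3 \<Rightarrow> real^3)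
    \<Rightarrow> (real^3 \<Rightarrow> real^3^3) \<Rightarrow> real^3 \<Rightarrow> real^3 \<Rightarrow> real" where
  "kin_alpha chi xi gxi hxi x v =
     chi (sqrt ((\<bar>v \<bullet> gxi x\<bar>)^2 - 2 * xi x * (v \<bullet> (hxi x *v v))))"

end

theory Submission
  imports Defs "HOL-Probability.Distributions"
begin

text \<open>
  Write \<open>B = G \<cdot> (n \<bullet> v\<^sub>1) \<cdot> I\<^sub>0 z\<close> with a Gaussian factor \<open>G\<close> and a Bessel argument \<open>z\<close>
  linear in \<open>v\<^sub>1 \<bullet> n\<close>. Since \<open>I\<^sub>0 z\<close> and \<open>|I\<^sub>0' z|\<close> are at most \<open>exp |z|\<close>, everything is
  controlled by \<open>A \<cdot> G \<cdot> exp |z|\<close>. Splitting \<open>v\<close> and \<open>v\<^sub>1\<close> into normal and tangential parts,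
  its exponent is a quadratic form whose cross terms (from \<open>z\<close> and from the tangential
  Gaussian) are absorbed by the diagonal terms once \<open>T\<^sub>w\<close> is within \<open>T\<^sub>0/10\<close> of \<open>T\<^sub>0\<close> and
  \<open>r\<^sub>\<perp>, r\<^sub>\<parallel>\<close> are within \<open>1/100\<close> of 1; this gives
  \<open>A G exp |z| \<le> exp (-(|v|\<^sup>2 + |v\<^sub>1|\<^sup>2) / (10 T\<^sub>0)) / T\<^sub>0\<^sup>2\<close>. Every weight occurring in
  the four integrals is at most a multiple of \<open>(1 + |v|\<^sup>2 + |v\<^sub>1|\<^sup>2)\<^sup>2\<close>, which half of this
  decay absorbs; what remains is a Gaussian in \<open>v\<^sub>1\<close> whose integral depends on \<open>T\<^sub>0\<close> only.
  On the boundary \<open>\<xi> = 0\<close>, so \<open>\<alpha>(x\<^sub>1, v\<^sub>1) = \<chi>(|\<nabla>\<xi>| n \<bullet> v\<^sub>1) \<ge> min (|\<nabla>\<xi>| n \<bullet> v\<^sub>1) \<epsilon>\<close>,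
  and the factor \<open>n \<bullet> v\<^sub>1\<close> of \<open>B\<close> cancels the first alternative. Finally
  \<open>\<partial>\<^sub>i A = \<partial>\<^sub>T A \<cdot> \<partial>\<^sub>i (T\<^sub>w \<circ> \<eta>)\<close>, where \<open>|\<partial>\<^sub>T A| \<le> C A (1 + |v|\<^sup>2)\<close> and
  \<open>\<partial>\<^sub>i (T\<^sub>w \<circ> \<eta>)\<close> is bounded by compactness of the boundary and of the chart domains.
\<close>

section \<open>Gaussian integrals\<close>

lemma nn_integral_exp_neg_norm_sq:
  fixes k :: real
  assumes k: "0 < k"
  shows "(\<integral>\<^sup>+x. ennreal (exp (- k * (norm (x::'a::euclidean_space))\<^sup>2)) \<partial>lborel)
         = ennreal (sqrt (pi / k) ^ DIM('a))"
proof -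
  define \<sigma> where "\<sigma> = sqrt (1 / (2 * k))"
  have \<sigma>: "0 < \<sigma>" "2 * \<sigma>\<^sup>2 = 1 / k" using k by (simp_all add: \<sigma>_def)
  have density: "exp (- k * t\<^sup>2) = sqrt (pi / k) * normal_density 0 \<sigma> t" for t
  proof -
    have "2 * pi * \<sigma>\<^sup>2 = pi / k" "(t - 0)\<^sup>2 / (2 * \<sigma>\<^sup>2) = k * t\<^sup>2"
      using \<sigma> k by (simp_all add: field_simps)
    then show ?thesis using k by (simp add: normal_density_def)
  qed
  have one_dim: "(\<integral>\<^sup>+t. ennreal (exp (- k * t\<^sup>2)) \<partial>lborel) = ennreal (sqrt (pi / k))"
  proof -
    have "(\<integral>\<^sup>+t. ennreal (exp (- k * t\<^sup>2)) \<partial>lborel)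
        = (\<integral>\<^sup>+t. ennreal (sqrt (pi / k)) * ennreal (normal_density 0 \<sigma> t) \<partial>lborel)"
      using k by (intro nn_integral_cong) (subst density, simp add: ennreal_mult')
    also have "\<dots> = ennreal (sqrt (pi / k)) * (\<integral>\<^sup>+t. ennreal (normal_density 0 \<sigma> t) \<partial>lborel)"
      by (rule nn_integral_cmult) measurable
    also have "(\<integral>\<^sup>+t. ennreal (normal_density 0 \<sigma> t) \<partial>lborel) = 1"
      using \<sigma> by (subst nn_integral_eq_integral)
        (auto simp: integrable_normal_density integral_normal_density)
    finally show ?thesis by simp
  qed
  have product: "ennreal (exp (- k * (norm x)\<^sup>2)) = (\<Prod>b\<in>Basis. ennreal (exp (- k * (x \<bullet> b)\<^sup>2)))"
    for x :: 'a
  proof -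
    have "(norm x)\<^sup>2 = (\<Sum>b\<in>Basis. (x \<bullet> b)\<^sup>2)"
      unfolding power2_norm_eq_inner euclidean_inner[of x x] by (simp add: power2_eq_square)
    then show ?thesis
      by (simp add: sum_distrib_left exp_sum[symmetric] sum_negf prod_ennreal)
  qed
  have "(\<integral>\<^sup>+x. ennreal (exp (- k * (norm (x::'a))\<^sup>2)) \<partial>lborel)
      = (\<integral>\<^sup>+x. (\<Prod>b\<in>Basis. (\<lambda>b t. ennreal (exp (- k * t\<^sup>2))) b ((x::'a) \<bullet> b)) \<partial>lborel)"
    by (simp only: product)
  also have "\<dots> = (\<Prod>b\<in>(Basis::'a set). \<integral>\<^sup>+t. ennreal (exp (- k * t\<^sup>2)) \<partial>lborel)"
    by (rule nn_integral_lborel_prod) auto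
  finally show ?thesis
    using k by (simp only: one_dim prod_constant) (simp add: ennreal_power)
qed

lemma nn_integral_le_gaussian:
  fixes f :: "'a::euclidean_space \<Rightarrow> real"
  assumes a: "0 \<le> a" and K: "0 \<le> K" and k: "0 < k"
    and f: "\<And>x. x \<in> S \<Longrightarrow> a * f x \<le> K * exp (- k * (norm x)\<^sup>2)"
  shows "ennreal a * (\<integral>\<^sup>+x. ennreal (f x) * indicator S x \<partial>lborel)
         \<le> ennreal (K * sqrt (pi / k) ^ DIM('a))"
proof (cases "a = 0")
  case False
  with a have a: "0 < a" by simp
  have "(\<integral>\<^sup>+x. ennreal (f x) * indicator S x \<partial>lborel)
      \<le> (\<integral>\<^sup>+x. ennreal (K / a) * ennreal (exp (- k * (norm (x::'a))\<^sup>2)) \<partial>lborel)"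
  proof (intro nn_integral_mono)
    fix x :: 'a
    show "ennreal (f x) * indicator S x \<le> ennreal (K / a) * ennreal (exp (- k * (norm x)\<^sup>2))"
    proof (cases "x \<in> S")
      case True
      with f a have "f x \<le> K / a * exp (- k * (norm x)\<^sup>2)" by (simp add: field_simps)
      with True a K show ?thesis by (simp add: ennreal_mult[symmetric] ennreal_leI)
    qed simp
  qed
  also have "\<dots> = ennreal (K / a) * ennreal (sqrt (pi / k) ^ DIM('a))"
    using nn_integral_exp_neg_norm_sq[OF k, where 'a='a] by (subst nn_integral_cmult) auto
  finally have "ennreal a * (\<integral>\<^sup>+x. ennreal (f x) * indicator S x \<partial>lborel)
      \<le> ennreal a * (ennreal (K / a) * ennreal (sqrt (pi / k) ^ DIM('a)))"
    by (rule mult_left_mono) simp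
  also have "\<dots> = ennreal (K * sqrt (pi / k) ^ DIM('a))"
    using a K by (simp add: ennreal_mult'[symmetric] mult.assoc[symmetric])
  finally show ?thesis .
qed simp

section \<open>The modified Bessel functions \<open>I\<^sub>0\<close> and \<open>I\<^sub>1\<close>\<close>

definition I1 :: "real \<Rightarrow> real" where
  "I1 y = (1 / pi) * integral {0..pi} (\<lambda>\<phi>. cos \<phi> * exp (y * cos \<phi>))"

lemma I0_has_real_derivative: "(I0 has_real_derivative I1 y) (at y)"
proof -
  have "((\<lambda>y. integral (cbox 0 pi) (\<lambda>\<phi>. exp (y * cos \<phi>))) has_field_derivative
        integral (cbox 0 pi) (\<lambda>\<phi>. cos \<phi> * exp (y * cos \<phi>))) (at y within UNIV)"
    by (rule leibniz_rule_field_derivative)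
      (auto intro!: derivative_eq_intros integrable_continuous_interval continuous_intros
        simp: case_prod_beta cbox_interval)
  then show ?thesis
    unfolding I0_def[abs_def] I1_def by (auto intro!: derivative_eq_intros simp: cbox_interval)
qed

lemma exp_mult_cos_le:
  fixes y \<phi> :: real
  shows "exp (y * cos \<phi>) \<le> exp \<bar>y\<bar>"
proof -
  have "y * cos \<phi> \<le> \<bar>y * cos \<phi>\<bar>" by (rule abs_ge_self)
  also have "\<dots> = \<bar>y\<bar> * \<bar>cos \<phi>\<bar>" by (rule abs_mult)
  also have "\<dots> \<le> \<bar>y\<bar>" using abs_cos_le_one[of \<phi>] by (simp add: mult_left_le)
  finally show ?thesis by simp
qed

lemma I0_nonneg: "0 \<le> I0 y"
proof -
  have "0 \<le> integral {0..pi} (\<lambda>\<phi>. exp (y * cos \<phi>))"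
    by (auto intro!: integral_nonneg integrable_continuous_interval continuous_intros)
  then show ?thesis unfolding I0_def by simp
qed

lemma I0_le_exp_abs: "I0 y \<le> exp \<bar>y\<bar>"
proof -
  have "integral {0..pi} (\<lambda>\<phi>. exp (y * cos \<phi>)) \<le> integral {0..pi} (\<lambda>\<phi>. exp \<bar>y\<bar>)"
    by (rule integral_le[OF _ _ exp_mult_cos_le]) (auto intro!: integrable_continuous_interval continuous_intros)
  then show ?thesis unfolding I0_def using pi_gt_zero by (simp add: field_simps)
qed

lemma abs_I1_le_exp_abs: "\<bar>I1 y\<bar> \<le> exp \<bar>y\<bar>"
proof -
  have "norm (integral {0..pi} (\<lambda>\<phi>. cos \<phi> * exp (y * cos \<phi>))) \<le> integral {0..pi} (\<lambda>\<phi>. exp \<bar>y\<bar>)"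
  proof (rule integral_norm_bound_integral)
    fix \<phi> :: real
    have "\<bar>cos \<phi>\<bar> * exp (y * cos \<phi>) \<le> 1 * exp \<bar>y\<bar>"
      using abs_cos_le_one[of \<phi>] exp_mult_cos_le[of y \<phi>] by (intro mult_mono) auto
    then show "norm (cos \<phi> * exp (y * cos \<phi>)) \<le> exp \<bar>y\<bar>" by (simp add: abs_mult)
  qed (auto intro!: integrable_continuous_interval continuous_intros)
  then show ?thesis unfolding I1_def using pi_gt_zero by (simp add: field_simps abs_mult)
qed

lemma le_one_plus_sq: "(r::real) \<le> 1 + r\<^sup>2"
proof -
  have "0 \<le> (r - 1 / 2)\<^sup>2" by simp
  then show ?thesis by (simp add: power2_eq_square algebra_simps)
qed

lemma norm_diff_scaleR_sq_ge:
  fixes w u :: "'a::real_inner"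
  shows "(1 - \<bar>q\<bar>) * (norm w)\<^sup>2 - \<bar>q\<bar> * (norm u)\<^sup>2 \<le> (norm (w - q *\<^sub>R u))\<^sup>2"
proof -
  have expand: "(norm (w - q *\<^sub>R u))\<^sup>2 = (norm w)\<^sup>2 - 2 * q * (w \<bullet> u) + q\<^sup>2 * (norm u)\<^sup>2"
    unfolding power2_norm_eq_inner
    by (simp add: inner_diff_left inner_diff_right inner_commute power2_eq_square algebra_simps)
  have "2 * \<bar>w \<bullet> u\<bar> \<le> (norm w)\<^sup>2 + (norm u)\<^sup>2"
    using Cauchy_Schwarz_ineq2[of w u] sum_squares_bound[of "norm w" "norm u"]
    by (simp add: power2_eq_square)
  then have "\<bar>q\<bar> * (2 * \<bar>w \<bullet> u\<bar>) \<le> \<bar>q\<bar> * ((norm w)\<^sup>2 + (norm u)\<^sup>2)"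
    by (rule mult_left_mono) simp
  moreover have "2 * q * (w \<bullet> u) \<le> \<bar>q\<bar> * (2 * \<bar>w \<bullet> u\<bar>)"
    by (metis abs_ge_self abs_mult abs_numeral mult.assoc mult.left_commute)
  ultimately have "2 * q * (w \<bullet> u) \<le> \<bar>q\<bar> * (norm w)\<^sup>2 + \<bar>q\<bar> * (norm u)\<^sup>2"
    by (simp add: distrib_left)
  moreover have "0 \<le> q\<^sup>2 * (norm u)\<^sup>2" by simp
  ultimately show ?thesis
    unfolding expand left_diff_distrib by linarith
qed

lemma one_plus_sq_mult_exp_le:
  fixes c X :: real
  assumes c: "0 < c" and X: "0 \<le> X"
  shows "(1 + X)\<^sup>2 * exp (- c * X) \<le> exp (- (c / 2) * X) / (min 1 (c / 4))\<^sup>2"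
proof -
  define m where "m = min 1 (c / 4)"
  have m: "0 < m" "m \<le> 1" "m \<le> c / 4" using c by (auto simp: m_def)
  have "m * X \<le> (c / 4) * X"
    using m X by (intro mult_right_mono) auto
  then have "m * (1 + X) \<le> 1 + (c / 4) * X"
    using m by (simp add: distrib_left)
  also have "\<dots> \<le> exp ((c / 4) * X)" by (rule exp_ge_add_one_self)
  finally have "(m * (1 + X))\<^sup>2 \<le> (exp ((c / 4) * X))\<^sup>2"
    using m X by (intro power_mono) auto
  also have "\<dots> = exp ((c / 2) * X)"
    by (simp only: power2_eq_square exp_add[symmetric]) simp
  finally have "m\<^sup>2 * (1 + X)\<^sup>2 \<le> exp ((c / 2) * X)"
    by (simp only: power_mult_distrib)
  then have "(1 + X)\<^sup>2 \<le> exp ((c / 2) * X) / m\<^sup>2"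
    using m by (simp add: le_divide_eq mult.commute)
  then have "(1 + X)\<^sup>2 * exp (- c * X) \<le> exp ((c / 2) * X) / m\<^sup>2 * exp (- c * X)"
    by (rule mult_right_mono) simp
  also have "\<dots> = exp (- (c / 2) * X) / m\<^sup>2"
    by (simp add: mult_exp_exp)
  finally show ?thesis unfolding m_def .
qed

section \<open>Structure of the kernel \<open>B\<close>\<close>

definition tang :: "'a::real_inner \<Rightarrow> 'a \<Rightarrow> 'a" where
  "tang n v = v - (v \<bullet> n) *\<^sub>R n"

lemma norm_sq_split:
  fixes n v :: "'a::real_inner"
  assumes "norm n = 1"
  shows "(norm v)\<^sup>2 = (v \<bullet> n)\<^sup>2 + (norm (tang n v))\<^sup>2"
proof -
  have "n \<bullet> n = 1" using assms power2_norm_eq_inner[of n] by simp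
  then show ?thesis
    unfolding power2_norm_eq_inner tang_def
    by (simp add: inner_diff_left inner_diff_right inner_commute power2_eq_square algebra_simps)
qed

lemma norm_tang_le:
  fixes n v :: "'a::real_inner"
  assumes "norm n = 1"
  shows "norm (tang n v) \<le> norm v"
proof (rule power2_le_imp_le)
  show "(norm (tang n v))\<^sup>2 \<le> (norm v)\<^sup>2"
    using norm_sq_split[OF assms, of v] zero_le_power2[of "v \<bullet> n"] by linarith
qed simp

lemma abs_inner_unit_le:
  fixes n v :: "'a::real_inner"
  assumes "norm n = 1"
  shows "\<bar>v \<bullet> n\<bar> \<le> norm v"
  using Cauchy_Schwarz_ineq2[of v n] assms by simp

definition Bgauss :: "real \<Rightarrow> real \<Rightarrow> real \<Rightarrow> real \<Rightarrow> real^3 \<Rightarrow> real^3 \<Rightarrow> real^3 \<Rightarrow> real" where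
  "Bgauss T0 rperp rpar tw n v v1 =
     exp (- (1 / (4 * T0) - 1 / (2 * tw)) * (norm v1)\<^sup>2)
   * exp (- (1 / (2 * tw)) * (((v1 \<bullet> n)\<^sup>2 + (1 - rperp) * (v \<bullet> n)\<^sup>2) / rperp
       + (norm (tang n v1 - (1 - rpar) *\<^sub>R tang n v))\<^sup>2 / (rpar * (2 - rpar))))"

definition Barg :: "real \<Rightarrow> real \<Rightarrow> real^3 \<Rightarrow> real^3 \<Rightarrow> real^3 \<Rightarrow> real" where
  "Barg rperp tw n v v1 = sqrt (1 - rperp) * (v1 \<bullet> n) * (v \<bullet> n) / (rperp * tw)"

lemma Bfun_eq:
  "Bfun T0 rperp rpar tw n v v1 = Bgauss T0 rperp rpar tw n v v1 * (n \<bullet> v1) * I0 (Barg rperp tw n v v1)"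
  unfolding Bfun_def Bgauss_def Barg_def tang_def Let_def by (simp add: mult_ac)

definition Bgauss_log_deriv :: "real \<Rightarrow> real \<Rightarrow> real \<Rightarrow> real \<Rightarrow> real^3 \<Rightarrow> real^3 \<Rightarrow> real^3 \<Rightarrow> real^3 \<Rightarrow> real" where
  "Bgauss_log_deriv T0 rperp rpar tw n v v1 h =
     - (1 / (4 * T0) - 1 / (2 * tw)) * (2 * (v1 \<bullet> h))
     - (1 / (2 * tw)) * (2 * (v1 \<bullet> n) * (h \<bullet> n) / rperp
       + 2 * ((tang n v1 - (1 - rpar) *\<^sub>R tang n v) \<bullet> tang n h) / (rpar * (2 - rpar)))"

lemma Bgauss_has_derivative:
  assumes "rperp \<noteq> 0" "rpar \<noteq> 0" "rpar \<noteq> 2"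
  shows "(Bgauss T0 rperp rpar tw n v has_derivative
     (\<lambda>h. Bgauss T0 rperp rpar tw n v v1 * Bgauss_log_deriv T0 rperp rpar tw n v v1 h)) (at v1)"
  unfolding Bgauss_def[abs_def] Bgauss_log_deriv_def tang_def power2_norm_eq_inner
  by (rule derivative_eq_intros refl | simp add: assms)+
    (simp add: fun_eq_iff inner_diff_right inner_diff_left inner_commute algebra_simps)

definition DBfun :: "real \<Rightarrow> real \<Rightarrow> real \<Rightarrow> real \<Rightarrow> real^3 \<Rightarrow> real^3 \<Rightarrow> real^3 \<Rightarrow> real^3 \<Rightarrow> real" where
  "DBfun T0 rperp rpar tw n v v1 h = Bgauss T0 rperp rpar tw n v v1 *
     (Bgauss_log_deriv T0 rperp rpar tw n v v1 h * (n \<bullet> v1) * I0 (Barg rperp tw n v v1)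
      + (n \<bullet> h) * I0 (Barg rperp tw n v v1)
      + (n \<bullet> v1) * Barg rperp tw n v h * I1 (Barg rperp tw n v v1))"

lemma Bfun_has_derivative:
  assumes "rperp \<noteq> 0" "rpar \<noteq> 0" "rpar \<noteq> 2"
  shows "(Bfun T0 rperp rpar tw n v has_derivative DBfun T0 rperp rpar tw n v v1) (at v1)"
proof -
  have Barg: "(Barg rperp tw n v has_derivative Barg rperp tw n v) (at v1)"
  proof -
    define c where "c = sqrt (1 - rperp) * (v \<bullet> n) / (rperp * tw)"
    have "Barg rperp tw n v = (\<lambda>v1. (v1 \<bullet> n) * c)"
      by (simp add: Barg_def c_def fun_eq_iff)
    then show ?thesis by (auto intro!: derivative_eq_intros)
  qed
  have normal: "((\<lambda>v1. n \<bullet> v1) has_derivative (\<lambda>h. n \<bullet> h)) (at v1)"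
    by (rule derivative_eq_intros refl | simp)+
  have "((\<lambda>v1. Bgauss T0 rperp rpar tw n v v1 * (n \<bullet> v1) * I0 (Barg rperp tw n v v1))
      has_derivative DBfun T0 rperp rpar tw n v v1) (at v1)"
    unfolding DBfun_def
    by (rule has_derivative_eq_rhs[OF has_derivative_mult[OF has_derivative_mult[OF
          Bgauss_has_derivative[OF assms] normal] DERIV_compose_FDERIV[OF I0_has_real_derivative Barg]]])
      (simp add: fun_eq_iff algebra_simps)
  then show ?thesis by (simp add: Bfun_eq[abs_def])
qed

definition Bmajorant :: "real \<Rightarrow> real \<Rightarrow> real \<Rightarrow> real \<Rightarrow> real^3 \<Rightarrow> real^3 \<Rightarrow> real^3 \<Rightarrow> real" where
  "Bmajorant T0 rperp rpar tw n v v1 = Bgauss T0 rperp rpar tw n v v1 * exp \<bar>Barg rperp tw n v v1\<bar>"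

lemma Bmajorant_pos: "0 < Bmajorant T0 rperp rpar tw n v v1"
  by (simp add: Bmajorant_def Bgauss_def)

lemma Bfun_nonneg: "0 < n \<bullet> v1 \<Longrightarrow> 0 \<le> Bfun T0 rperp rpar tw n v v1"
  by (simp add: Bfun_eq Bgauss_def I0_nonneg)

lemma Bfun_le_Bmajorant:
  "0 < n \<bullet> v1 \<Longrightarrow> Bfun T0 rperp rpar tw n v v1 \<le> (n \<bullet> v1) * Bmajorant T0 rperp rpar tw n v v1"
proof -
  assume "0 < n \<bullet> v1"
  then have "Bgauss T0 rperp rpar tw n v v1 * (n \<bullet> v1) * I0 (Barg rperp tw n v v1)
      \<le> Bgauss T0 rperp rpar tw n v v1 * (n \<bullet> v1) * exp \<bar>Barg rperp tw n v v1\<bar>"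
    by (intro mult_left_mono I0_le_exp_abs) (simp add: Bgauss_def)
  then show ?thesis unfolding Bfun_eq Bmajorant_def by (simp only: mult_ac)
qed

section \<open>Near-diffuse wall parameters\<close>

text \<open>The smallness assumptions of the theorem, with \<open>\<delta>\<^sub>0 = min (1/100) (T\<^sub>0/10)\<close>.\<close>

locale near_diffuse =
  fixes T0 tw rperp rpar :: real
  assumes T0_pos: "0 < T0"
    and tw_near: "\<bar>tw - T0\<bar> < T0 / 10"
    and rperp_near: "99 / 100 < rperp" "rperp \<le> 1"
    and rpar_near: "\<bar>1 - rpar\<bar> < 1 / 100"
begin

lemma tw_bounds: "9 / 10 * T0 < tw" "tw < 11 / 10 * T0"
  using tw_near by linarith+

lemma tw_pos: "0 < tw"
  using tw_bounds T0_pos by linarith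

lemma rpar_bounds: "0 < rpar" "rpar < 2"
  using rpar_near by linarith+

lemma rpar_factor_bounds: "99 / 100 \<le> rpar * (2 - rpar)" "rpar * (2 - rpar) \<le> 1"
proof -
  have "(1 - rpar)\<^sup>2 \<le> 1 / 100"
    using rpar_near abs_le_square_iff[of "1 - rpar" "1/10"] by (simp add: power2_eq_square)
  moreover have "rpar * (2 - rpar) = 1 - (1 - rpar)\<^sup>2" by (simp add: power2_eq_square algebra_simps)
  ultimately show "99 / 100 \<le> rpar * (2 - rpar)" "rpar * (2 - rpar) \<le> 1" by simp_all
qed

lemma Barg_coeff_le: "sqrt (1 - rperp) / (rperp * tw) \<le> 1 / (9 * tw)"
proof -
  have "sqrt (1 - rperp) \<le> sqrt ((1 / 10)\<^sup>2)"
    using rperp_near by (intro real_sqrt_le_mono) (simp add: power2_eq_square)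
  also have "\<dots> \<le> rperp * tw / (9 * tw)" using rperp_near tw_pos by simp
  finally show ?thesis using rperp_near tw_pos by (simp add: divide_le_eq)
qed

lemma abs_Barg_le: "\<bar>Barg rperp tw n v v1\<bar> \<le> ((v1 \<bullet> n)\<^sup>2 + (v \<bullet> n)\<^sup>2) / (18 * tw)"
proof -
  have "\<bar>Barg rperp tw n v v1\<bar> = sqrt (1 - rperp) / (rperp * tw) * (\<bar>v1 \<bullet> n\<bar> * \<bar>v \<bullet> n\<bar>)"
    using rperp_near tw_pos by (simp add: Barg_def abs_mult)
  also have "\<dots> \<le> 1 / (9 * tw) * (((v1 \<bullet> n)\<^sup>2 + (v \<bullet> n)\<^sup>2) / 2)"
    using Barg_coeff_le sum_squares_bound[of "\<bar>v1 \<bullet> n\<bar>" "\<bar>v \<bullet> n\<bar>"] tw_pos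
    by (intro mult_mono) (auto simp: power2_eq_square)
  finally show ?thesis by simp
qed

lemma abs_Barg_le_norm:
  assumes "norm n = 1"
  shows "\<bar>Barg rperp tw n v h\<bar> \<le> norm v * norm h / T0"
proof -
  have "\<bar>Barg rperp tw n v h\<bar> = sqrt (1 - rperp) / (rperp * tw) * (\<bar>h \<bullet> n\<bar> * \<bar>v \<bullet> n\<bar>)"
    using rperp_near tw_pos by (simp add: Barg_def abs_mult)
  also have "\<dots> \<le> 1 / T0 * (norm h * norm v)"
  proof (rule mult_mono)
    have "1 / (9 * tw) \<le> 1 / T0"
      using tw_bounds T0_pos by (intro divide_left_mono) auto
    then show "sqrt (1 - rperp) / (rperp * tw) \<le> 1 / T0"
      using Barg_coeff_le by linarith
    show "\<bar>h \<bullet> n\<bar> * \<bar>v \<bullet> n\<bar> \<le> norm h * norm v"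
      using abs_inner_unit_le[OF assms] by (intro mult_mono) auto
  qed (use T0_pos in auto)
  finally show ?thesis by (simp add: mult.commute)
qed

lemma Acoef_pos: "0 < Acoef T0 rperp rpar tw v"
  unfolding Acoef_def using rperp_near rpar_bounds tw_pos
  by (intro mult_pos_pos divide_pos_pos) auto

lemma Acoef_le: "Acoef T0 rperp rpar tw v \<le> exp ((1 / (4 * T0) - 1 / (2 * tw)) * (norm v)\<^sup>2) / T0\<^sup>2"
proof -
  have "98 / 100 * 3 \<le> rperp * (rpar * (2 - rpar)) * pi"
    using rperp_near rpar_factor_bounds pi_gt3 mult_mono[of "99/100" rperp "99/100" "rpar * (2 - rpar)"]
    by (intro mult_mono) auto
  then have "2 / (rperp * rpar * (2 - rpar) * pi) \<le> 1"
    by (simp add: mult.assoc)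
  moreover have "1 / (2 * tw)\<^sup>2 \<le> 1 / T0\<^sup>2"
    using tw_bounds T0_pos by (intro divide_left_mono power_mono) auto
  ultimately have "2 / (rperp * rpar * (2 - rpar) * pi) * (1 / (2 * tw)\<^sup>2) \<le> 1 * (1 / T0\<^sup>2)"
    using tw_pos by (intro mult_mono) auto
  then have "2 / (rperp * rpar * (2 - rpar) * pi) * (1 / (2 * tw)\<^sup>2)
      * exp ((1 / (4 * T0) - 1 / (2 * tw)) * (norm v)\<^sup>2)
      \<le> 1 / T0\<^sup>2 * exp ((1 / (4 * T0) - 1 / (2 * tw)) * (norm v)\<^sup>2)"
    by (intro mult_right_mono) auto
  then show ?thesis unfolding Acoef_def by simp
qed

text \<open>The exponent of \<open>A \<cdot> Bmajorant\<close> in coordinates: \<open>x\<close>, \<open>y\<close> are the normal components of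
  \<open>v\<^sub>1\<close>, \<open>v\<close>, \<open>W\<close>, \<open>U\<close> the squares of their tangential components, and \<open>N\<close> stands for
  \<open>|v\<^sub>1\<^sub>\<parallel> - (1 - r\<^sub>\<parallel>) v\<^sub>\<parallel>|\<^sup>2\<close>. Each of the four squares ends up with a coefficient at most
  \<open>-1/(10 T\<^sub>0)\<close> because \<open>1/(2 t\<^sub>w)\<close> lies between \<open>5/(11 T\<^sub>0)\<close> and \<open>5/(9 T\<^sub>0)\<close>.\<close>

lemma kernel_exponent_le:
  fixes x y U W N :: real
  assumes U: "0 \<le> U" and W: "0 \<le> W" and N: "99 / 100 * W - 1 / 100 * U \<le> N"
  shows "(1 / (4 * T0) - 1 / (2 * tw)) * ((y\<^sup>2 + U) - (x\<^sup>2 + W)) + (x\<^sup>2 + y\<^sup>2) / (18 * tw)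
           - 1 / (2 * tw) * (x\<^sup>2 + N)
         \<le> - (x\<^sup>2 + y\<^sup>2 + U + W) / (10 * T0)"
proof -
  define p where "p = 1 / T0"
  define b where "b = 1 / (2 * tw)"
  have b: "5 * p / 11 < b" "b < 5 * p / 9" "0 < b"
    using tw_bounds T0_pos tw_pos by (simp_all add: p_def b_def field_simps)
  have "(p / 4 - 8 * b / 9) * y\<^sup>2 \<le> - p / 10 * y\<^sup>2"
    "(p / 4 - 99 * b / 100) * U \<le> - p / 10 * U"
    "(- p / 4 + b / 9) * x\<^sup>2 \<le> - p / 10 * x\<^sup>2"
    "(- p / 4 + b / 100) * W \<le> - p / 10 * W"
    using b U W by (intro mult_right_mono; simp)+
  moreover have "b * (99 / 100 * W - 1 / 100 * U) \<le> b * N"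
    using b N by (intro mult_left_mono) auto
  moreover have "(1 / (4 * T0) - 1 / (2 * tw)) * ((y\<^sup>2 + U) - (x\<^sup>2 + W)) + (x\<^sup>2 + y\<^sup>2) / (18 * tw)
      - 1 / (2 * tw) * (x\<^sup>2 + N)
    = (p / 4 - 8 * b / 9) * y\<^sup>2 + (p / 4 - 99 * b / 100) * U + (- p / 4 + b / 9) * x\<^sup>2
      + (- p / 4 + b / 100) * W + (b * (99 / 100 * W - 1 / 100 * U) - b * N)"
  proof -
    have e: "1 / (4 * T0) = p / 4" "1 / (2 * tw) = b" "(x\<^sup>2 + y\<^sup>2) / (18 * tw) = b / 9 * (x\<^sup>2 + y\<^sup>2)"
      by (simp_all add: p_def b_def)
    show ?thesis unfolding e by (simp add: algebra_simps)
  qed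
  moreover have "- (x\<^sup>2 + y\<^sup>2 + U + W) / (10 * T0) = - p / 10 * y\<^sup>2 + - p / 10 * U + - p / 10 * x\<^sup>2 + - p / 10 * W"
    using T0_pos by (simp add: p_def field_simps)
  ultimately show ?thesis by linarith
qed

lemma abs_Acoef_derivative_le:
  "\<bar>Acoef T0 rperp rpar tw v * ((norm v)\<^sup>2 / (2 * tw\<^sup>2) - 2 / tw)\<bar>
   \<le> (3 / T0 + 1 / T0\<^sup>2) * Acoef T0 rperp rpar tw v * (1 + (norm v)\<^sup>2)"
proof -
  have "2 / tw \<le> 3 / T0"
    using tw_bounds T0_pos tw_pos by (simp add: field_simps)
  moreover have "1 / (2 * tw\<^sup>2) \<le> 1 / T0\<^sup>2"
  proof -
    have "(9 / 10 * T0)\<^sup>2 \<le> tw\<^sup>2"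
      using tw_bounds T0_pos by (intro power_mono) auto
    moreover have "(9 / 10 * T0)\<^sup>2 = 81 / 100 * T0\<^sup>2"
      by (simp add: power2_eq_square)
    ultimately have "T0\<^sup>2 \<le> 2 * tw\<^sup>2"
      using zero_le_power2[of T0] by linarith
    then show ?thesis
      using T0_pos tw_pos by (intro divide_left_mono) auto
  qed
  moreover have "(norm v)\<^sup>2 / (2 * tw\<^sup>2) \<le> (norm v)\<^sup>2 * (1 / T0\<^sup>2)"
    using mult_left_mono[OF calculation(2), of "(norm v)\<^sup>2"] by simp
  moreover have "0 \<le> (norm v)\<^sup>2 / (2 * tw\<^sup>2)" "0 \<le> 2 / tw"
    using tw_pos by simp_all
  ultimately have "\<bar>(norm v)\<^sup>2 / (2 * tw\<^sup>2) - 2 / tw\<bar> \<le> (norm v)\<^sup>2 * (1 / T0\<^sup>2) + 3 / T0"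
    by (intro abs_leI) linarith+
  also have "\<dots> \<le> (3 / T0 + 1 / T0\<^sup>2) * (1 + (norm v)\<^sup>2)"
    using T0_pos by (simp add: algebra_simps)
  finally show ?thesis
    using Acoef_pos[of v] mult_left_mono by (simp add: abs_mult mult.assoc mult.left_commute)
qed

end

section \<open>Velocity integrals at a boundary point\<close>

text \<open>\<open>kernel_const T\<^sub>0\<close> is the integral over \<open>\<real>\<^sup>3\<close> of the Gaussian majorant
  \<open>exp (-|v\<^sub>1|\<^sup>2 / (20 T\<^sub>0)) / (T\<^sub>0 min 1 (1 / (40 T\<^sub>0)))\<^sup>2\<close> of \<open>weighted_Bmajorant_le\<close> below.\<close>

definition kernel_const :: "real \<Rightarrow> real" where
  "kernel_const T0 = sqrt (20 * pi * T0) ^ 3 / (T0 * min 1 (1 / (40 * T0)))\<^sup>2"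

locale near_diffuse_normal = near_diffuse +
  fixes n :: "real^3"
  assumes n_unit: "norm n = 1"
begin

lemma Bmajorant_exponent_le:
  "(1 / (4 * T0) - 1 / (2 * tw)) * ((norm v)\<^sup>2 - (norm v1)\<^sup>2) + \<bar>Barg rperp tw n v v1\<bar>
     - 1 / (2 * tw) * (((v1 \<bullet> n)\<^sup>2 + (1 - rperp) * (v \<bullet> n)\<^sup>2) / rperp
       + (norm (tang n v1 - (1 - rpar) *\<^sub>R tang n v))\<^sup>2 / (rpar * (2 - rpar)))
   \<le> - ((norm v)\<^sup>2 + (norm v1)\<^sup>2) / (10 * T0)"
proof -
  define N where "N = (norm (tang n v1 - (1 - rpar) *\<^sub>R tang n v))\<^sup>2"
  have "(v1 \<bullet> n)\<^sup>2 * rperp \<le> (v1 \<bullet> n)\<^sup>2"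
    using rperp_near by (simp add: mult_left_le)
  moreover have "0 \<le> (1 - rperp) * (v \<bullet> n)\<^sup>2"
    using rperp_near by simp
  moreover have "0 < rperp"
    using rperp_near by linarith
  ultimately have "(v1 \<bullet> n)\<^sup>2 \<le> ((v1 \<bullet> n)\<^sup>2 + (1 - rperp) * (v \<bullet> n)\<^sup>2) / rperp"
    by (simp only: pos_le_divide_eq)
  moreover have "N \<le> N / (rpar * (2 - rpar))"
    using rpar_factor_bounds by (simp add: N_def le_divide_eq mult_left_le)
  ultimately have "1 / (2 * tw) * ((v1 \<bullet> n)\<^sup>2 + N)
      \<le> 1 / (2 * tw) * (((v1 \<bullet> n)\<^sup>2 + (1 - rperp) * (v \<bullet> n)\<^sup>2) / rperp + N / (rpar * (2 - rpar)))"
    using tw_pos by (intro mult_left_mono) auto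
  moreover have "99 / 100 * (norm (tang n v1))\<^sup>2 - 1 / 100 * (norm (tang n v))\<^sup>2 \<le> N"
  proof -
    have "99 / 100 * (norm (tang n v1))\<^sup>2 \<le> (1 - \<bar>1 - rpar\<bar>) * (norm (tang n v1))\<^sup>2"
      "\<bar>1 - rpar\<bar> * (norm (tang n v))\<^sup>2 \<le> 1 / 100 * (norm (tang n v))\<^sup>2"
      using rpar_near by (intro mult_right_mono; simp)+
    then show ?thesis
      using norm_diff_scaleR_sq_ge[of "1 - rpar" "tang n v1" "tang n v"] by (simp add: N_def)
  qed
  then have "(1 / (4 * T0) - 1 / (2 * tw)) * (((v \<bullet> n)\<^sup>2 + (norm (tang n v))\<^sup>2)
        - ((v1 \<bullet> n)\<^sup>2 + (norm (tang n v1))\<^sup>2))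
      + ((v1 \<bullet> n)\<^sup>2 + (v \<bullet> n)\<^sup>2) / (18 * tw) - 1 / (2 * tw) * ((v1 \<bullet> n)\<^sup>2 + N)
    \<le> - ((v1 \<bullet> n)\<^sup>2 + (v \<bullet> n)\<^sup>2 + (norm (tang n v))\<^sup>2 + (norm (tang n v1))\<^sup>2) / (10 * T0)"
    by (intro kernel_exponent_le) auto
  ultimately show ?thesis
    using abs_Barg_le[of n v v1] norm_sq_split[OF n_unit, of v] norm_sq_split[OF n_unit, of v1]
    unfolding N_def by (simp add: algebra_simps)
qed

lemma Acoef_Bmajorant_le:
  "Acoef T0 rperp rpar tw v * Bmajorant T0 rperp rpar tw n v v1
   \<le> exp (- ((norm v)\<^sup>2 + (norm v1)\<^sup>2) / (10 * T0)) / T0\<^sup>2"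
proof -
  define a where "a = 1 / (4 * T0) - 1 / (2 * tw)"
  define Q where "Q = ((v1 \<bullet> n)\<^sup>2 + (1 - rperp) * (v \<bullet> n)\<^sup>2) / rperp
       + (norm (tang n v1 - (1 - rpar) *\<^sub>R tang n v))\<^sup>2 / (rpar * (2 - rpar))"
  define Z where "Z = \<bar>Barg rperp tw n v v1\<bar>"
  have "Acoef T0 rperp rpar tw v * Bmajorant T0 rperp rpar tw n v v1
      \<le> exp (a * (norm v)\<^sup>2) / T0\<^sup>2 * Bmajorant T0 rperp rpar tw n v v1"
    using Acoef_le Bmajorant_pos[THEN less_imp_le] unfolding a_def by (rule mult_right_mono)
  also have "\<dots> = exp (a * (norm v)\<^sup>2) / T0\<^sup>2
      * (exp (- a * (norm v1)\<^sup>2) * exp (- (1 / (2 * tw)) * Q) * exp Z)"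
    unfolding Bmajorant_def Bgauss_def a_def Q_def Z_def ..
  also have "\<dots> = exp (a * ((norm v)\<^sup>2 - (norm v1)\<^sup>2) + Z - 1 / (2 * tw) * Q) / T0\<^sup>2"
    by (simp add: mult_exp_exp algebra_simps)
  also have "\<dots> \<le> exp (- ((norm v)\<^sup>2 + (norm v1)\<^sup>2) / (10 * T0)) / T0\<^sup>2"
    using Bmajorant_exponent_le unfolding a_def Q_def Z_def by (intro divide_right_mono) auto
  finally show ?thesis .
qed

lemma weighted_Bmajorant_le:
  "(1 + (norm v)\<^sup>2 + (norm v1)\<^sup>2)\<^sup>2 * (Acoef T0 rperp rpar tw v * Bmajorant T0 rperp rpar tw n v v1)
   \<le> exp (- (norm v1)\<^sup>2 / (20 * T0)) / (T0 * min 1 (1 / (40 * T0)))\<^sup>2"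
proof -
  define X where "X = (norm v)\<^sup>2 + (norm v1)\<^sup>2"
  define c where "c = 1 / (10 * T0)"
  have c: "0 < c" using T0_pos by (simp add: c_def)
  have "- ((norm v)\<^sup>2 + (norm v1)\<^sup>2) / (10 * T0) = - c * X"
    using T0_pos by (simp add: X_def c_def field_simps)
  then have "(1 + X)\<^sup>2 * (Acoef T0 rperp rpar tw v * Bmajorant T0 rperp rpar tw n v v1)
      \<le> (1 + X)\<^sup>2 * (exp (- c * X) / T0\<^sup>2)"
    using Acoef_Bmajorant_le[of v v1] by (intro mult_left_mono) auto
  also have "\<dots> = (1 + X)\<^sup>2 * exp (- c * X) / T0\<^sup>2"
    by simp
  also have "\<dots> \<le> exp (- (c / 2) * X) / (min 1 (c / 4))\<^sup>2 / T0\<^sup>2"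
    using one_plus_sq_mult_exp_le[OF c, of X] by (intro divide_right_mono) (auto simp: X_def)
  also have "\<dots> \<le> exp (- (norm v1)\<^sup>2 / (20 * T0)) / (min 1 (c / 4))\<^sup>2 / T0\<^sup>2"
    using T0_pos by (intro divide_right_mono) (auto simp: X_def c_def field_simps)
  finally show ?thesis
    unfolding X_def c_def by (simp add: power_mult_distrib mult.commute add.assoc)
qed

lemma kernel_const_mono:
  assumes "a \<le> ennreal (c * kernel_const T0)" "c \<le> C"
  shows "a \<le> ennreal (C * kernel_const T0)"
proof -
  have "0 \<le> kernel_const T0" using T0_pos by (simp add: kernel_const_def)
  with assms show ?thesis
    by (meson ennreal_leI mult_right_mono order_trans)
qed

lemma kernel_integral_le:
  assumes a: "0 \<le> a" and K: "0 \<le> K"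
    and f: "\<And>v1. 0 < n \<bullet> v1 \<Longrightarrow> a * f v1 \<le> K * ((1 + (norm v)\<^sup>2 + (norm v1)\<^sup>2)\<^sup>2
              * (Acoef T0 rperp rpar tw v * Bmajorant T0 rperp rpar tw n v v1))"
  shows "ennreal a * (\<integral>\<^sup>+v1. ennreal (f v1) * indicator {v1. 0 < n \<bullet> v1} v1 \<partial>lborel)
         \<le> ennreal (K * kernel_const T0)"
proof -
  define m where "m = T0 * min 1 (1 / (40 * T0))"
  have "ennreal a * (\<integral>\<^sup>+v1. ennreal (f v1) * indicator {v1. 0 < n \<bullet> v1} v1 \<partial>lborel)
      \<le> ennreal (K / m\<^sup>2 * sqrt (pi / (1 / (20 * T0))) ^ DIM(real^3))"
  proof (rule nn_integral_le_gaussian[OF a])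
    fix v1 :: "real^3"
    assume "v1 \<in> {v1. 0 < n \<bullet> v1}"
    then have "a * f v1 \<le> K * ((1 + (norm v)\<^sup>2 + (norm v1)\<^sup>2)\<^sup>2
        * (Acoef T0 rperp rpar tw v * Bmajorant T0 rperp rpar tw n v v1))"
      by (intro f) simp
    also have "\<dots> \<le> K * (exp (- (norm v1)\<^sup>2 / (20 * T0)) / m\<^sup>2)"
      unfolding m_def by (rule mult_left_mono[OF weighted_Bmajorant_le K])
    also have "\<dots> = K / m\<^sup>2 * exp (- (1 / (20 * T0)) * (norm v1)\<^sup>2)"
      by simp
    finally show "a * f v1 \<le> K / m\<^sup>2 * exp (- (1 / (20 * T0)) * (norm v1)\<^sup>2)" .
  qed (use K T0_pos in auto)
  also have "K / m\<^sup>2 * sqrt (pi / (1 / (20 * T0))) ^ DIM(real^3) = K * kernel_const T0"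
    by (simp add: kernel_const_def m_def mult_ac)
  finally show ?thesis .
qed

lemma Bfun_le_weight_Bmajorant:
  assumes "0 < n \<bullet> v1"
  shows "Bfun T0 rperp rpar tw n v v1 \<le> (1 + (norm v)\<^sup>2 + (norm v1)\<^sup>2) * Bmajorant T0 rperp rpar tw n v v1"
proof -
  have "n \<bullet> v1 \<le> 1 + (norm v)\<^sup>2 + (norm v1)\<^sup>2"
    using abs_inner_unit_le[OF n_unit, of v1] le_one_plus_sq[of "norm v1"] abs_ge_self[of "v1 \<bullet> n"]
      zero_le_power2[of "norm v"] inner_commute[of n v1] by linarith
  then show ?thesis
    using Bfun_le_Bmajorant[OF assms] Bmajorant_pos[THEN less_imp_le]
    by (meson mult_right_mono order_trans)
qed

lemma Bfun_weighted_integral_le: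
  "ennreal (Acoef T0 rperp rpar tw v) *
     (\<integral>\<^sup>+v1. ennreal ((1 + (norm v1)\<^sup>2 + (norm v)\<^sup>2) * Bfun T0 rperp rpar tw n v v1)
        * indicator {v1. 0 < n \<bullet> v1} v1 \<partial>lborel)
   \<le> ennreal (kernel_const T0)"
proof -
  have "ennreal (Acoef T0 rperp rpar tw v) *
     (\<integral>\<^sup>+v1. ennreal ((1 + (norm v1)\<^sup>2 + (norm v)\<^sup>2) * Bfun T0 rperp rpar tw n v v1)
        * indicator {v1. 0 < n \<bullet> v1} v1 \<partial>lborel)
   \<le> ennreal (1 * kernel_const T0)"
  proof (rule kernel_integral_le)
    fix v1 :: "real^3"
    assume x: "0 < n \<bullet> v1"
    let ?W = "1 + (norm v)\<^sup>2 + (norm v1)\<^sup>2"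
    have "Acoef T0 rperp rpar tw v * ((1 + (norm v1)\<^sup>2 + (norm v)\<^sup>2) * Bfun T0 rperp rpar tw n v v1)
        = Acoef T0 rperp rpar tw v * (?W * Bfun T0 rperp rpar tw n v v1)"
      by (simp add: add_ac)
    also have "\<dots> \<le> Acoef T0 rperp rpar tw v * (?W * (?W * Bmajorant T0 rperp rpar tw n v v1))"
      using Bfun_le_weight_Bmajorant[OF x] Acoef_pos[of v]
      by (intro mult_left_mono) auto
    also have "\<dots> = 1 * (?W\<^sup>2 * (Acoef T0 rperp rpar tw v * Bmajorant T0 rperp rpar tw n v v1))"
      by (simp add: power2_eq_square mult_ac)
    finally show "Acoef T0 rperp rpar tw v * ((1 + (norm v1)\<^sup>2 + (norm v)\<^sup>2) * Bfun T0 rperp rpar tw n v v1)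
        \<le> 1 * (?W\<^sup>2 * (Acoef T0 rperp rpar tw v * Bmajorant T0 rperp rpar tw n v v1))" .
  qed (use Acoef_pos[of v] in auto)
  then show ?thesis by simp
qed

lemma Bfun_div_integral_le:
  assumes g0: "0 < g0" and eps: "0 < eps"
    and al: "\<And>v1. 0 < n \<bullet> v1 \<Longrightarrow> min (g0 * (n \<bullet> v1)) eps \<le> al v1"
  shows "ennreal (Acoef T0 rperp rpar tw v) *
     (\<integral>\<^sup>+v1. ennreal (Bfun T0 rperp rpar tw n v v1 / al v1) * indicator {v1. 0 < n \<bullet> v1} v1 \<partial>lborel)
   \<le> ennreal ((1 / g0 + 1 / eps) * kernel_const T0)"
proof (rule kernel_integral_le)
  fix v1 :: "real^3"
  assume x: "0 < n \<bullet> v1"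
  let ?W = "1 + (norm v)\<^sup>2 + (norm v1)\<^sup>2"
  let ?B = "Bfun T0 rperp rpar tw n v v1"
  let ?M = "Bmajorant T0 rperp rpar tw n v v1"
  have M: "0 < ?M" by (rule Bmajorant_pos)
  have W: "1 \<le> ?W" by simp
  have "0 < min (g0 * (n \<bullet> v1)) eps"
    using g0 eps x by simp
  then have "?B / al v1 \<le> ?B / min (g0 * (n \<bullet> v1)) eps"
    using al[OF x] Bfun_nonneg[OF x] by (intro divide_left_mono) auto
  also have "\<dots> \<le> (1 / g0 + 1 / eps) * (?W * ?M)"
  proof (cases "g0 * (n \<bullet> v1) \<le> eps")
    case True
    have "?B / (g0 * (n \<bullet> v1)) \<le> (n \<bullet> v1) * ?M / (g0 * (n \<bullet> v1))"
      using Bfun_le_Bmajorant[OF x] g0 x by (intro divide_right_mono) auto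
    also have "\<dots> = 1 / g0 * ?M" using x by simp
    also have "\<dots> \<le> (1 / g0 + 1 / eps) * (?W * ?M)"
      using M W g0 eps by (intro mult_mono) (auto simp: mult_le_cancel_right1)
    finally show ?thesis using True by simp
  next
    case False
    have "?B / eps \<le> 1 / eps * (?W * ?M)"
      using Bfun_le_weight_Bmajorant[OF x] eps by (simp add: divide_right_mono)
    also have "\<dots> \<le> (1 / g0 + 1 / eps) * (?W * ?M)"
      using M W g0 by (intro mult_right_mono) auto
    finally show ?thesis using False by simp
  qed
  also have "\<dots> \<le> (1 / g0 + 1 / eps) * (?W\<^sup>2 * ?M)"
  proof -
    have "?W \<le> ?W\<^sup>2"
      using mult_right_mono[OF W, of ?W] W by (simp add: power2_eq_square)
    then show ?thesis
      using M g0 eps by (intro mult_left_mono mult_right_mono) auto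
  qed
  finally have "Acoef T0 rperp rpar tw v * (?B / al v1)
      \<le> Acoef T0 rperp rpar tw v * ((1 / g0 + 1 / eps) * (?W\<^sup>2 * ?M))"
    by (rule mult_left_mono) (use Acoef_pos[of v] in auto)
  then show "Acoef T0 rperp rpar tw v * (?B / al v1)
      \<le> (1 / g0 + 1 / eps) * (?W\<^sup>2 * (Acoef T0 rperp rpar tw v * ?M))"
    by (simp only: mult_ac)
qed (use Acoef_pos[of v] g0 eps in auto)

lemma abs_Bgauss_log_deriv_le:
  "\<bar>Bgauss_log_deriv T0 rperp rpar tw n v v1 h\<bar> \<le> (10 * norm v1 + 4 * norm v) * norm h / T0"
proof -
  define p where "p = 1 / T0"
  define a where "a = 1 / (4 * T0) - 1 / (2 * tw)"
  define b where "b = 1 / (2 * tw)"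
  define w where "w = tang n v1 - (1 - rpar) *\<^sub>R tang n v"
  have a: "\<bar>a\<bar> \<le> p" and b: "0 < b" "b \<le> p"
    using tw_bounds T0_pos tw_pos by (auto simp: a_def b_def p_def abs_le_iff field_simps)
  have r: "0 < 1 / rperp" "1 / rperp \<le> 2" "0 < 1 / (rpar * (2 - rpar))" "1 / (rpar * (2 - rpar)) \<le> 2"
    using rperp_near rpar_factor_bounds by (auto simp: field_simps)
  have "norm w \<le> norm v1 + \<bar>1 - rpar\<bar> * norm (tang n v)"
    unfolding w_def
    using norm_triangle_ineq4[of "tang n v1" "(1 - rpar) *\<^sub>R tang n v"] norm_tang_le[OF n_unit, of v1]
    by simp
  also have "\<dots> \<le> norm v1 + 1 * norm v"
    using rpar_near norm_tang_le[OF n_unit, of v] by (intro add_left_mono mult_mono) auto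
  finally have w: "\<bar>w \<bullet> tang n h\<bar> \<le> (norm v1 + norm v) * norm h"
    using Cauchy_Schwarz_ineq2[of w "tang n h"] norm_tang_le[OF n_unit, of h]
    by (smt (verit) mult_mono norm_ge_zero)
  have x: "\<bar>v1 \<bullet> n\<bar> * \<bar>h \<bullet> n\<bar> \<le> norm v1 * norm h"
    using abs_inner_unit_le[OF n_unit] by (intro mult_mono) auto
  have triangle: "\<bar>- a * P - b * (Q / r + S / s)\<bar> \<le> \<bar>a\<bar> * \<bar>P\<bar> + b * (\<bar>Q\<bar> * (1 / r) + \<bar>S\<bar> * (1 / s))"
    if "0 \<le> b" "0 < r" "0 < s" for a b P Q S r s :: real
  proof -
    have "\<bar>Q / r + S / s\<bar> \<le> \<bar>Q\<bar> * (1 / r) + \<bar>S\<bar> * (1 / s)"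
      using abs_triangle_ineq[of "Q / r" "S / s"] that by simp
    then have "\<bar>b * (Q / r + S / s)\<bar> \<le> b * (\<bar>Q\<bar> * (1 / r) + \<bar>S\<bar> * (1 / s))"
      using that by (simp add: abs_mult mult_left_mono)
    then show ?thesis
      using abs_triangle_ineq4[of "- a * P" "b * (Q / r + S / s)"] by (simp add: abs_mult)
  qed
  have "\<bar>Bgauss_log_deriv T0 rperp rpar tw n v v1 h\<bar>
      \<le> \<bar>a\<bar> * (2 * \<bar>v1 \<bullet> h\<bar>) + b * (2 * (\<bar>v1 \<bullet> n\<bar> * \<bar>h \<bullet> n\<bar>) * (1 / rperp)
         + 2 * \<bar>w \<bullet> tang n h\<bar> * (1 / (rpar * (2 - rpar))))"
    using triangle[of b rperp "rpar * (2 - rpar)" a "2 * (v1 \<bullet> h)" "2 * (v1 \<bullet> n) * (h \<bullet> n)"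
        "2 * (w \<bullet> tang n h)"] b r
    unfolding Bgauss_log_deriv_def a_def[symmetric] unfolding b_def[symmetric] w_def[symmetric]
    by (simp add: abs_mult mult.assoc)
  also have "\<dots> \<le> p * (2 * (norm v1 * norm h)) + p * (2 * (norm v1 * norm h) * 2
         + 2 * ((norm v1 + norm v) * norm h) * 2)"
    using a b r x w Cauchy_Schwarz_ineq2[of v1 h] abs_inner_unit_le[OF n_unit]
    by (intro add_mono mult_mono) auto
  also have "\<dots> = (10 * norm v1 + 4 * norm v) * norm h / T0"
    using T0_pos by (simp add: p_def field_simps)
  finally show ?thesis .
qed

lemma abs_DBfun_le:
  "\<bar>DBfun T0 rperp rpar tw n v v1 h\<bar>
   \<le> (1 + 13 / T0) * (1 + (norm v)\<^sup>2 + (norm v1)\<^sup>2) * Bmajorant T0 rperp rpar tw n v v1 * norm h"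
proof -
  define R where "R = norm v1"
  define S where "S = norm v"
  define H where "H = norm h"
  define G where "G = Bgauss T0 rperp rpar tw n v v1"
  define z where "z = Barg rperp tw n v v1"
  define gd where "gd = Bgauss_log_deriv T0 rperp rpar tw n v v1 h"
  have G: "0 < G" by (simp add: G_def Bgauss_def)
  have RSH: "0 \<le> R" "0 \<le> S" "0 \<le> H" by (simp_all add: R_def S_def H_def)
  have x: "\<bar>n \<bullet> v1\<bar> \<le> R" and hn: "\<bar>n \<bullet> h\<bar> \<le> H"
    using abs_inner_unit_le[OF n_unit, of v1] abs_inner_unit_le[OF n_unit, of h]
    by (simp_all add: R_def H_def inner_commute)
  have I: "0 \<le> I0 z" "I0 z \<le> exp \<bar>z\<bar>" "\<bar>I1 z\<bar> \<le> exp \<bar>z\<bar>"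
    by (simp_all add: I0_nonneg I0_le_exp_abs abs_I1_le_exp_abs)
  have t1: "\<bar>gd * (n \<bullet> v1) * I0 z\<bar> \<le> (10 * R + 4 * S) * H / T0 * R * exp \<bar>z\<bar>"
    unfolding abs_mult using abs_Bgauss_log_deriv_le[of v v1 h] x I RSH T0_pos
    by (intro mult_mono) (auto simp: gd_def R_def S_def H_def)
  have t2: "\<bar>(n \<bullet> h) * I0 z\<bar> \<le> H * exp \<bar>z\<bar>"
    unfolding abs_mult using hn I RSH by (intro mult_mono) auto
  have t3: "\<bar>(n \<bullet> v1) * Barg rperp tw n v h * I1 z\<bar> \<le> R * (S * H / T0) * exp \<bar>z\<bar>"
    unfolding abs_mult using abs_Barg_le_norm[OF n_unit, of v h] x I RSH T0_pos
    by (intro mult_mono) (auto simp: S_def H_def)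
  have "\<bar>DBfun T0 rperp rpar tw n v v1 h\<bar>
      \<le> G * ((10 * R + 4 * S) * H / T0 * R * exp \<bar>z\<bar> + H * exp \<bar>z\<bar> + R * (S * H / T0) * exp \<bar>z\<bar>)"
    unfolding DBfun_def G_def[symmetric] z_def[symmetric] gd_def[symmetric] abs_mult[of G] abs_of_pos[OF G]
    using G t1 t2 t3
      abs_triangle_ineq[of "gd * (n \<bullet> v1) * I0 z + (n \<bullet> h) * I0 z" "(n \<bullet> v1) * Barg rperp tw n v h * I1 z"]
      abs_triangle_ineq[of "gd * (n \<bullet> v1) * I0 z" "(n \<bullet> h) * I0 z"]
    by (intro mult_left_mono) auto
  also have "\<dots> = G * exp \<bar>z\<bar> * H * (1 + (10 * R\<^sup>2 + 5 * (R * S)) / T0)"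
    using T0_pos by (simp add: field_simps power2_eq_square)
  also have "\<dots> \<le> G * exp \<bar>z\<bar> * H * ((1 + 13 / T0) * (1 + S\<^sup>2 + R\<^sup>2))"
  proof (rule mult_left_mono)
    have "5 * (R * S) \<le> 5 / 2 * R\<^sup>2 + 5 / 2 * S\<^sup>2"
      using sum_squares_bound[of R S] by (simp add: power2_eq_square)
    then have "10 * R\<^sup>2 + 5 * (R * S) \<le> 13 * S\<^sup>2 + 13 * R\<^sup>2"
      using zero_le_power2[of R] zero_le_power2[of S] by linarith
    then have "(10 * R\<^sup>2 + 5 * (R * S)) / T0 \<le> (13 * S\<^sup>2 + 13 * R\<^sup>2) / T0"
      using T0_pos by (intro divide_right_mono) auto
    moreover have "(1 + 13 / T0) * (1 + S\<^sup>2 + R\<^sup>2) = 1 + (S\<^sup>2 + R\<^sup>2) + 13 / T0 + (13 * S\<^sup>2 + 13 * R\<^sup>2) / T0"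
      by (simp add: algebra_simps add_divide_distrib)
    moreover have "0 \<le> S\<^sup>2 + R\<^sup>2" "0 \<le> 13 / T0"
      using T0_pos by simp_all
    ultimately show "1 + (10 * R\<^sup>2 + 5 * (R * S)) / T0 \<le> (1 + 13 / T0) * (1 + S\<^sup>2 + R\<^sup>2)"
      by linarith
  qed (use G RSH in simp)
  finally show ?thesis
    by (simp add: Bmajorant_def R_def S_def H_def G_def z_def mult_ac)
qed

lemma Bfun_has_derivative_DBfun:
  "(Bfun T0 rperp rpar tw n v has_derivative DBfun T0 rperp rpar tw n v v1) (at v1)"
  using rperp_near rpar_bounds by (intro Bfun_has_derivative) auto

lemma frechet_derivative_Bfun:
  "frechet_derivative (Bfun T0 rperp rpar tw n v) (at v1) = DBfun T0 rperp rpar tw n v v1"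
  using Bfun_has_derivative_DBfun by (rule frechet_derivative_at[symmetric])

lemma onorm_DBfun_le:
  "onorm (DBfun T0 rperp rpar tw n v v1)
   \<le> (1 + 13 / T0) * (1 + (norm v)\<^sup>2 + (norm v1)\<^sup>2) * Bmajorant T0 rperp rpar tw n v v1"
  using abs_DBfun_le by (auto intro: onorm_le)

lemma Bfun_derivative_integral_le:
  "ennreal (Acoef T0 rperp rpar tw v) *
     (\<integral>\<^sup>+v1. ennreal ((1 + norm v1) * onorm (frechet_derivative (Bfun T0 rperp rpar tw n v) (at v1)))
        * indicator {v1. 0 < n \<bullet> v1} v1 \<partial>lborel)
   \<le> ennreal (2 * (1 + 13 / T0) * kernel_const T0)"
  unfolding frechet_derivative_Bfun
proof (rule kernel_integral_le)
  fix v1 :: "real^3"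
  let ?W = "1 + (norm v)\<^sup>2 + (norm v1)\<^sup>2"
  let ?M = "Bmajorant T0 rperp rpar tw n v v1"
  have "1 + norm v1 \<le> 2 * ?W"
    unfolding distrib_left
    using le_one_plus_sq[of "norm v1"] zero_le_power2[of "norm v"] zero_le_power2[of "norm v1"]
    by linarith
  moreover have "onorm (DBfun T0 rperp rpar tw n v v1) \<le> (1 + 13 / T0) * ?W * ?M"
    by (rule onorm_DBfun_le)
  moreover have "0 \<le> onorm (DBfun T0 rperp rpar tw n v v1)"
    using Bfun_has_derivative_DBfun by (intro onorm_pos_le has_derivative_bounded_linear)
  ultimately have "(1 + norm v1) * onorm (DBfun T0 rperp rpar tw n v v1)
      \<le> (2 * ?W) * ((1 + 13 / T0) * ?W * ?M)"
    by (intro mult_mono) auto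
  then have "Acoef T0 rperp rpar tw v * ((1 + norm v1) * onorm (DBfun T0 rperp rpar tw n v v1))
      \<le> Acoef T0 rperp rpar tw v * ((2 * ?W) * ((1 + 13 / T0) * ?W * ?M))"
    by (rule mult_left_mono) (use Acoef_pos[of v] in simp)
  then show "Acoef T0 rperp rpar tw v * ((1 + norm v1) * onorm (DBfun T0 rperp rpar tw n v v1))
      \<le> 2 * (1 + 13 / T0) * (?W\<^sup>2 * (Acoef T0 rperp rpar tw v * ?M))"
    by (simp only: power2_eq_square mult_ac)
qed (use Acoef_pos[of v] T0_pos in auto)

lemma abs_mult_Bfun_integral_le:
  assumes K: "0 \<le> K" and D: "\<bar>D\<bar> \<le> K * Acoef T0 rperp rpar tw v * (1 + (norm v)\<^sup>2)"
  shows "ennreal \<bar>D\<bar> *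
     (\<integral>\<^sup>+v1. ennreal (Bfun T0 rperp rpar tw n v v1) * indicator {v1. 0 < n \<bullet> v1} v1 \<partial>lborel)
   \<le> ennreal (K * kernel_const T0)"
proof -
  have "ennreal \<bar>D\<bar> *
     (\<integral>\<^sup>+v1. ennreal (Bfun T0 rperp rpar tw n v v1) * indicator {v1. 0 < n \<bullet> v1} v1 \<partial>lborel)
   \<le> ennreal (K * Acoef T0 rperp rpar tw v * (1 + (norm v)\<^sup>2)) *
     (\<integral>\<^sup>+v1. ennreal (Bfun T0 rperp rpar tw n v v1) * indicator {v1. 0 < n \<bullet> v1} v1 \<partial>lborel)"
    using D by (intro mult_right_mono ennreal_leI) auto
  also have "\<dots> \<le> ennreal (K * kernel_const T0)"
  proof (rule kernel_integral_le)
    fix v1 :: "real^3"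
    assume x: "0 < n \<bullet> v1"
    let ?W = "1 + (norm v)\<^sup>2 + (norm v1)\<^sup>2"
    have "(1 + (norm v)\<^sup>2) * Bfun T0 rperp rpar tw n v v1 \<le> ?W * (?W * Bmajorant T0 rperp rpar tw n v v1)"
      using Bfun_le_weight_Bmajorant[OF x] Bfun_nonneg[OF x]
      by (intro mult_mono) auto
    then have "K * Acoef T0 rperp rpar tw v * ((1 + (norm v)\<^sup>2) * Bfun T0 rperp rpar tw n v v1)
        \<le> K * Acoef T0 rperp rpar tw v * (?W * (?W * Bmajorant T0 rperp rpar tw n v v1))"
      using K Acoef_pos[of v] by (intro mult_left_mono) auto
    then show "K * Acoef T0 rperp rpar tw v * (1 + (norm v)\<^sup>2) * Bfun T0 rperp rpar tw n v v1
        \<le> K * (?W\<^sup>2 * (Acoef T0 rperp rpar tw v * Bmajorant T0 rperp rpar tw n v v1))"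
      by (simp add: power2_eq_square mult_ac)
  qed (use K Acoef_pos[of v] in auto)
  finally show ?thesis .
qed

end

section \<open>Tangential derivatives of \<open>A\<close>\<close>

lemma Acoef_has_real_derivative:
  assumes tw: "tw \<noteq> 0"
  shows "((\<lambda>t. Acoef T0 rperp rpar t v) has_real_derivative
           Acoef T0 rperp rpar tw v * ((norm v)\<^sup>2 / (2 * tw\<^sup>2) - 2 / tw)) (at tw)"
proof -
  define c0 where "c0 = 2 / (rperp * rpar * (2 - rpar) * pi)"
  define V where "V = (norm v)\<^sup>2"
  define e where "e = exp ((1 / (4 * T0) - 1 / (2 * tw)) * V)"
  have fe: "(\<lambda>t. Acoef T0 rperp rpar t v) = (\<lambda>t. c0 * ((1 / (2 * t)\<^sup>2) * exp ((1 / (4 * T0) - 1 / (2 * t)) * V)))"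
    by (simp add: Acoef_def c0_def V_def fun_eq_iff)
  have d1: "((\<lambda>t. 1 / (2 * t)\<^sup>2) has_real_derivative - 1 / (2 * tw^3)) (at tw)"
    by (rule derivative_eq_intros refl | simp add: tw)+
      (simp add: tw field_simps power2_eq_square power3_eq_cube power4_eq_xxxx)
  have dg: "((\<lambda>t. (1 / (4 * T0) - 1 / (2 * t)) * V) has_real_derivative V / (2 * tw\<^sup>2)) (at tw)"
    by (rule derivative_eq_intros refl | simp add: tw)+ (simp add: tw field_simps power2_eq_square)
  have d2: "((\<lambda>t. exp ((1 / (4 * T0) - 1 / (2 * t)) * V)) has_real_derivative e * (V / (2 * tw\<^sup>2))) (at tw)"
    unfolding e_def by (rule DERIV_fun_exp[OF dg])
  have "((\<lambda>t. c0 * ((1 / (2 * t)\<^sup>2) * exp ((1 / (4 * T0) - 1 / (2 * t)) * V))) has_real_derivative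
      c0 * ((- 1 / (2 * tw^3)) * e + (1 / (2 * tw)\<^sup>2) * (e * (V / (2 * tw\<^sup>2))))) (at tw)"
    using DERIV_cmult[OF DERIV_mult[OF d1 d2]] unfolding e_def by simp
  moreover have "c0 * ((- 1 / (2 * tw^3)) * e + (1 / (2 * tw)\<^sup>2) * (e * (V / (2 * tw\<^sup>2))))
      = (c0 * (1 / (2 * tw)\<^sup>2) * e) * (V / (2 * tw\<^sup>2) - 2 / tw)"
    using tw by (simp add: field_simps power2_eq_square power3_eq_cube power4_eq_xxxx)
  moreover have "Acoef T0 rperp rpar tw v = c0 * (1 / (2 * tw)\<^sup>2) * e"
    by (simp add: Acoef_def c0_def V_def e_def)
  ultimately show ?thesis using fe V_def by simp
qed

lemma directional_derivative_chain:
  fixes eta :: "'a::real_normed_vector \<Rightarrow> 'b::real_normed_vector" and g :: "'b \<Rightarrow> real"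
  assumes eta: "(eta has_derivative E) (at y)"
    and g: "(g has_derivative G) (at (eta y))"
    and f: "(f has_real_derivative f') (at (g (eta y)))"
    and D: "((\<lambda>t. f (g (eta (y + t *\<^sub>R e)))) has_real_derivative D) (at 0)"
  shows "D = G (E e) * f'"
proof -
  have line: "((\<lambda>t::real. y + t *\<^sub>R e) has_derivative (\<lambda>t. t *\<^sub>R e)) (at 0)"
    by (auto intro!: derivative_eq_intros)
  have "(eta has_derivative E) (at ((\<lambda>t. y + t *\<^sub>R e) 0))"
    using eta by simp
  note chain1 = diff_chain_at[OF line this]
  have "(g has_derivative G) (at ((eta \<circ> (\<lambda>t. y + t *\<^sub>R e)) 0))"
    using g by simp
  note chain2 = diff_chain_at[OF chain1 this]
  have "(f has_real_derivative f') (at ((g \<circ> (eta \<circ> (\<lambda>t. y + t *\<^sub>R e))) 0))"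
    using f by simp
  from DERIV_compose_FDERIV[OF this chain2]
  have "((\<lambda>t. f (g (eta (y + t *\<^sub>R e)))) has_derivative (\<lambda>t. G (E (t *\<^sub>R e)) * f')) (at 0)"
    by (simp add: o_def)
  moreover have "(\<lambda>t. G (E (t *\<^sub>R e)) * f') = (*) (G (E e) * f')"
    using bounded_linear.linear[OF has_derivative_bounded_linear[OF eta]]
      bounded_linear.linear[OF has_derivative_bounded_linear[OF g]]
    by (simp add: linear_scale fun_eq_iff)
  ultimately have "((\<lambda>t. f (g (eta (y + t *\<^sub>R e)))) has_real_derivative G (E e) * f') (at 0)"
    unfolding has_field_derivative_def by simp
  with D show ?thesis by (rule DERIV_unique)
qed

lemma C2_on_imp_C1_on:
  assumes "C2_on U f"
  shows "C1_on U f"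
proof -
  obtain f' where f': "\<And>x. x \<in> U \<Longrightarrow> (f has_derivative blinfun_apply (f' x)) (at x)" "C1_on U f'"
    using assms unfolding C2_on_def by blast
  then obtain f'' where "\<And>x. x \<in> U \<Longrightarrow> (f' has_derivative blinfun_apply (f'' x)) (at x)"
    unfolding C1_on_def by blast
  then have "continuous_on U f'"
    by (intro continuous_at_imp_continuous_on ballI has_derivative_continuous)
  with f'(1) show ?thesis
    unfolding C1_on_def by blast
qed

lemma C1_on_derivative_bounded:
  assumes "C1_on U f" "compact K" "K \<subseteq> U"
  obtains f' M where "\<And>x. x \<in> K \<Longrightarrow> (f has_derivative blinfun_apply (f' x)) (at x)"
    and "\<And>x. x \<in> K \<Longrightarrow> norm (f' x) \<le> M"
proof -
  obtain f' where f': "\<And>x. x \<in> U \<Longrightarrow> (f has_derivative blinfun_apply (f' x)) (at x)" "continuous_on U f'"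
    using assms(1) unfolding C1_on_def by blast
  have "compact (f' ` K)"
    using assms(2,3) f'(2) by (intro compact_continuous_image) (rule continuous_on_subset)
  then obtain M where "\<forall>z\<in>f' ` K. norm z \<le> M"
    using compact_imp_bounded bounded_iff by metis
  with f'(1) assms(3) show ?thesis
    by (intro that[of f' M]) auto
qed

lemma compact_half_cball: "compact (half_cball d)"
proof -
  have "half_cball d = cball 0 d \<inter> {x. 0 \<le> x $ 3}"
    by (auto simp: half_cball_def)
  moreover have "closed {x::real^3. 0 \<le> x $ 3}"
    by (rule closed_Collect_le) (auto intro!: continuous_intros)
  ultimately show ?thesis by (simp add: compact_Int_closed)
qed

lemma chart_derivatives_bounded:
  assumes "finite P" and "\<forall>p\<in>P. \<exists>V. open V \<and> half_cball \<delta>1 \<subseteq> V \<and> C2_on V (eta p)"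
  obtains M where "0 \<le> M" and
    "\<And>p y. p \<in> P \<Longrightarrow> y \<in> half_ball \<delta>1 \<Longrightarrow> \<exists>E. (eta p has_derivative blinfun_apply E) (at y) \<and> norm E \<le> M"
proof -
  have "\<forall>p\<in>P. \<exists>M. \<forall>y\<in>half_ball \<delta>1. \<exists>E. (eta p has_derivative blinfun_apply E) (at y) \<and> norm E \<le> M"
  proof
    fix p assume "p \<in> P"
    then obtain V where "half_cball \<delta>1 \<subseteq> V" "C1_on V (eta p)"
      using assms(2) C2_on_imp_C1_on by blast
    then obtain f' M where "\<And>y. y \<in> half_cball \<delta>1 \<Longrightarrow> (eta p has_derivative blinfun_apply (f' y)) (at y)"
        "\<And>y. y \<in> half_cball \<delta>1 \<Longrightarrow> norm (f' y) \<le> M"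
      using C1_on_derivative_bounded compact_half_cball by metis
    moreover have "half_ball \<delta>1 \<subseteq> half_cball \<delta>1"
      by (auto simp: half_ball_def half_cball_def)
    ultimately show "\<exists>M. \<forall>y\<in>half_ball \<delta>1. \<exists>E. (eta p has_derivative blinfun_apply E) (at y) \<and> norm E \<le> M"
      by blast
  qed
  then have "\<exists>Mp. \<forall>p\<in>P. \<forall>y\<in>half_ball \<delta>1.
      \<exists>E. (eta p has_derivative blinfun_apply E) (at y) \<and> norm E \<le> Mp p"
    by (rule finite_set_choice[OF assms(1)])
  then obtain Mp where
    Mp: "\<forall>p\<in>P. \<forall>y\<in>half_ball \<delta>1. \<exists>E. (eta p has_derivative blinfun_apply E) (at y) \<and> norm E \<le> Mp p"
    ..
  show ?thesis
  proof (rule that)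
    show "0 \<le> (\<Sum>q\<in>P. \<bar>Mp q\<bar>)"
      by (simp add: sum_nonneg)
    fix p y
    assume p: "p \<in> P" and "y \<in> half_ball \<delta>1"
    then obtain E where "(eta p has_derivative blinfun_apply E) (at y)" "norm E \<le> Mp p"
      using Mp by blast
    moreover have "Mp p \<le> (\<Sum>q\<in>P. \<bar>Mp q\<bar>)"
      using member_le_sum[OF p, of "\<lambda>q. \<bar>Mp q\<bar>"] assms(1) by simp
    ultimately show "\<exists>E. (eta p has_derivative blinfun_apply E) (at y) \<and> norm E \<le> (\<Sum>q\<in>P. \<bar>Mp q\<bar>)"
      by auto
  qed
qed

lemma tangential_derivative_bound:
  fixes g :: "real^3 \<Rightarrow> real" and eta :: "real^3 \<Rightarrow> real^3 \<Rightarrow> real^3"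
  assumes F: "compact F" and g: "C1_on U g" "F \<subseteq> U" and P: "finite P"
    and charts: "\<forall>p\<in>P. \<exists>V. open V \<and> half_cball \<delta>1 \<subseteq> V \<and> C2_on V (eta p)"
  obtains K where "0 \<le> K"
    and "\<And>p y e f f' D. p \<in> P \<Longrightarrow> y \<in> half_ball \<delta>1 \<Longrightarrow> eta p y \<in> F
      \<Longrightarrow> (f has_real_derivative f') (at (g (eta p y)))
      \<Longrightarrow> ((\<lambda>t. f (g (eta p (y + t *\<^sub>R e)))) has_real_derivative D) (at 0)
      \<Longrightarrow> \<bar>D\<bar> \<le> K * norm e * \<bar>f'\<bar>"
proof -
  obtain g' Mg where g': "\<And>x. x \<in> F \<Longrightarrow> (g has_derivative blinfun_apply (g' x)) (at x)"
    "\<And>x. x \<in> F \<Longrightarrow> norm (g' x) \<le> Mg"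
    using C1_on_derivative_bounded[OF g(1) F g(2)] by metis
  obtain Me where Me: "0 \<le> Me"
    "\<And>p y. p \<in> P \<Longrightarrow> y \<in> half_ball \<delta>1 \<Longrightarrow> \<exists>E. (eta p has_derivative blinfun_apply E) (at y) \<and> norm E \<le> Me"
    using chart_derivatives_bounded[OF P charts] by metis
  show ?thesis
  proof (rule that[of "\<bar>Mg\<bar> * Me"])
    show "0 \<le> \<bar>Mg\<bar> * Me" using Me(1) by simp
    fix p y e f f' D
    assume p: "p \<in> P" and y: "y \<in> half_ball \<delta>1" and x: "eta p y \<in> F"
      and f: "(f has_real_derivative f') (at (g (eta p y)))"
      and D: "((\<lambda>t. f (g (eta p (y + t *\<^sub>R e)))) has_real_derivative D) (at 0)"
    obtain E where E: "(eta p has_derivative blinfun_apply E) (at y)" "norm E \<le> Me"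
      using Me(2)[OF p y] by blast
    have "D = g' (eta p y) (E e) * f'"
      by (rule directional_derivative_chain[OF E(1) g'(1)[OF x] f D])
    then have "\<bar>D\<bar> = \<bar>g' (eta p y) (E e)\<bar> * \<bar>f'\<bar>"
      by (simp add: abs_mult)
    also have "\<dots> \<le> \<bar>Mg\<bar> * (Me * norm e) * \<bar>f'\<bar>"
    proof (rule mult_right_mono)
      have "\<bar>g' (eta p y) (E e)\<bar> \<le> norm (g' (eta p y)) * norm (E e)"
        using norm_blinfun[of "g' (eta p y)"] by simp
      also have "\<dots> \<le> \<bar>Mg\<bar> * (Me * norm e)"
      proof (rule mult_mono)
        show "norm (E e) \<le> Me * norm e"
          using norm_blinfun[of E e] mult_right_mono[OF E(2) norm_ge_zero, of e] by linarith
      qed (use g'(2)[OF x] Me(1) in auto)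
      finally show "\<bar>g' (eta p y) (E e)\<bar> \<le> \<bar>Mg\<bar> * (Me * norm e)" .
    qed simp
    finally show "\<bar>D\<bar> \<le> \<bar>Mg\<bar> * Me * norm e * \<bar>f'\<bar>"
      by (simp only: mult.assoc)
  qed
qed

lemma tangential_Acoef_derivative_bound:
  fixes Tw :: "real^3 \<Rightarrow> real" and eta :: "real^3 \<Rightarrow> real^3 \<Rightarrow> real^3"
  assumes "compact F" "C1_on U Tw" "F \<subseteq> U" "finite P"
    and "\<forall>p\<in>P. \<exists>V. open V \<and> half_cball \<delta>1 \<subseteq> V \<and> C2_on V (eta p)"
    and T0: "0 < T0"
  obtains K where "0 \<le> K"
    and "\<And>p y e rperp rpar v D. p \<in> P \<Longrightarrow> y \<in> half_ball \<delta>1 \<Longrightarrow> eta p y \<in> F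
      \<Longrightarrow> near_diffuse T0 (Tw (eta p y)) rperp rpar
      \<Longrightarrow> ((\<lambda>t. Acoef T0 rperp rpar (Tw (eta p (y + t *\<^sub>R e))) v) has_real_derivative D) (at 0)
      \<Longrightarrow> \<bar>D\<bar> \<le> K * norm e * Acoef T0 rperp rpar (Tw (eta p y)) v * (1 + (norm v)\<^sup>2)"
proof -
  obtain K where K: "0 \<le> K"
    "\<And>p y e f f' D. p \<in> P \<Longrightarrow> y \<in> half_ball \<delta>1 \<Longrightarrow> eta p y \<in> F
      \<Longrightarrow> (f has_real_derivative f') (at (Tw (eta p y)))
      \<Longrightarrow> ((\<lambda>t. f (Tw (eta p (y + t *\<^sub>R e)))) has_real_derivative D) (at 0)
      \<Longrightarrow> \<bar>D\<bar> \<le> K * norm e * \<bar>f'\<bar>"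
    using tangential_derivative_bound[OF assms(1-5)] by blast
  show ?thesis
  proof (rule that[of "K * (3 / T0 + 1 / T0\<^sup>2)"])
    fix p y e rperp rpar v D
    assume p: "p \<in> P" "y \<in> half_ball \<delta>1" "eta p y \<in> F"
      and params: "near_diffuse T0 (Tw (eta p y)) rperp rpar"
      and D: "((\<lambda>t. Acoef T0 rperp rpar (Tw (eta p (y + t *\<^sub>R e))) v) has_real_derivative D) (at 0)"
    let ?tw = "Tw (eta p y)"
    have "\<bar>D\<bar> \<le> K * norm e * \<bar>Acoef T0 rperp rpar ?tw v * ((norm v)\<^sup>2 / (2 * ?tw\<^sup>2) - 2 / ?tw)\<bar>"
      using p D near_diffuse.tw_pos[OF params] by (intro K(2)) (auto intro: Acoef_has_real_derivative)
    also have "\<dots> \<le> K * norm e * ((3 / T0 + 1 / T0\<^sup>2) * Acoef T0 rperp rpar ?tw v * (1 + (norm v)\<^sup>2))"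
      using near_diffuse.abs_Acoef_derivative_le[OF params] K(1) by (intro mult_left_mono) auto
    finally show "\<bar>D\<bar> \<le> K * (3 / T0 + 1 / T0\<^sup>2) * norm e * Acoef T0 rperp rpar ?tw v * (1 + (norm v)\<^sup>2)"
      by (simp only: mult_ac)
  qed (use K(1) T0 in simp)
qed

section \<open>The boundary of \<open>\<Omega>\<close>\<close>

lemma frontier_sublevel_eq_zero:
  fixes xi :: "'a::topological_space \<Rightarrow> real"
  assumes c: "continuous_on UNIV xi" and x: "x \<in> frontier {x. xi x < 0}"
  shows "xi x = 0"
proof -
  have "closure {x. xi x < 0} \<subseteq> {x. xi x \<le> 0}"
    using c by (intro closure_minimal closed_Collect_le) (auto intro!: continuous_intros)
  moreover have "open {x. xi x < 0}"
    using c by (intro open_Collect_less) (auto intro!: continuous_intros)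
  ultimately show ?thesis
    using x by (force simp: frontier_def interior_open)
qed

lemma compact_nonzero_norm_ge:
  fixes f :: "'a::topological_space \<Rightarrow> 'b::real_normed_vector"
  assumes K: "compact K" and f: "continuous_on K f" and nz: "\<And>x. x \<in> K \<Longrightarrow> f x \<noteq> 0"
  obtains c where "0 < c" "\<And>x. x \<in> K \<Longrightarrow> c \<le> norm (f x)"
proof (cases "K = {}")
  case False
  obtain x0 where "x0 \<in> K" "\<And>x. x \<in> K \<Longrightarrow> norm (f x0) \<le> norm (f x)"
    using continuous_attains_inf[OF K False continuous_on_norm[OF f]] by blast
  with nz show ?thesis
    by (intro that[of "norm (f x0)"]) auto
qed (use that[of 1] in auto)

lemma nrm_unit: "g x \<noteq> 0 \<Longrightarrow> norm (nrm g x) = 1"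
  by (simp add: nrm_def)

lemma kin_alpha_boundary_ge:
  assumes chi_mono: "mono chi" and chi_id: "\<And>s. 0 \<le> s \<Longrightarrow> s \<le> \<epsilon> \<Longrightarrow> chi s = s" and eps: "0 \<le> \<epsilon>"
    and x: "xi x = 0" and g0: "g0 \<le> norm (gxi x)" and v1: "0 < nrm gxi x \<bullet> v1"
  shows "min (g0 * (nrm gxi x \<bullet> v1)) \<epsilon> \<le> kin_alpha chi xi gxi hxi x v1"
proof -
  define s where "s = nrm gxi x \<bullet> v1"
  have s: "0 < s" using v1 by (simp add: s_def)
  then have "gxi x \<noteq> 0" by (auto simp: s_def nrm_def)
  then have "v1 \<bullet> gxi x = norm (gxi x) * s"
    by (simp add: s_def nrm_def inner_commute)
  then have alpha: "kin_alpha chi xi gxi hxi x v1 = chi (norm (gxi x) * s)"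
    using s x by (simp add: kin_alpha_def abs_mult)
  show ?thesis
  proof (cases "norm (gxi x) * s \<le> \<epsilon>")
    case True
    then have "kin_alpha chi xi gxi hxi x v1 = norm (gxi x) * s"
      using s by (simp add: alpha chi_id)
    moreover have "g0 * s \<le> norm (gxi x) * s"
      using g0 s by (simp add: mult_right_mono)
    ultimately show ?thesis by (simp add: s_def)
  next
    case False
    then have "chi \<epsilon> \<le> kin_alpha chi xi gxi hxi x v1"
      using chi_mono by (simp add: alpha monoD)
    then show ?thesis
      using chi_id[OF eps order_refl] by simp
  qed
qed

lemma boundary_point_near_diffuse_normal:
  assumes "0 < T0" and "\<bar>tw - T0\<bar> < min (1 / 100) (T0 / 10)" and "gxi x \<noteq> 0"
    and "0 < rperp \<and> rperp \<le> 1 \<and> 0 < rpar \<and> rpar < 2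
      \<and> max \<bar>1 - rperp\<bar> \<bar>1 - rpar\<bar> < min (1 / 100) (T0 / 10)"
  shows "near_diffuse_normal T0 tw rperp rpar (nrm gxi x)"
proof unfold_locales
  have "\<bar>1 - rperp\<bar> < 1 / 100" and rpar: "\<bar>1 - rpar\<bar> < 1 / 100"
    using assms(4) unfolding max_less_iff_conj min_less_iff_conj by auto
  then show "99 / 100 < rperp"
    using abs_ge_self[of "1 - rperp"] by linarith
  show "\<bar>1 - rpar\<bar> < 1 / 100" by (fact rpar)
  show "norm (nrm gxi x) = 1"
    using assms(3) by (rule nrm_unit)
qed (use assms in auto)

theorem lemma22:
  fixes xi :: "real^3 \<Rightarrow> real" and gxi :: "real^3 \<Rightarrow> real^3" and hxi :: "real^3 \<Rightarrow> real^3^3"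
    and T0 :: real and \<epsilon> :: real and chi :: "real \<Rightarrow> real" and chi' :: "real \<Rightarrow> real"
  assumes xi_d1: "\<And>x. (xi has_derivative (\<lambda>h. gxi x \<bullet> h)) (at x)"
    and xi_d2: "\<And>x. (gxi has_derivative (\<lambda>h. hxi x *v h)) (at x)"
    and xi_C2: "continuous_on UNIV hxi"
    and bdd: "bounded {x. xi x < 0}"
    and convex: "\<exists>c>0. \<forall>x \<zeta>. \<zeta> \<bullet> (hxi x *v \<zeta>) \<ge> c * (norm \<zeta>)^2"
    and grad_nz: "\<exists>U. open U \<and> frontier {x. xi x < 0} \<subseteq> U \<and> (\<forall>x\<in>U. gxi x \<noteq> 0)"
    and T0_pos: "T0 > 0"
    and eps_pos: "\<epsilon> > 0"
    and chi_smooth: "\<And>k x. ((deriv ^^ k) chi) differentiable (at x)"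
    and chi_deriv: "\<And>s. (chi has_real_derivative chi' s) (at s)"
    and chi_mono: "mono chi"
    and chi_id: "\<And>s. 0 \<le> s \<Longrightarrow> s \<le> \<epsilon> \<Longrightarrow> chi s = s"
    and chi_const: "\<And>s. 4 * \<epsilon> \<le> s \<Longrightarrow> chi s = 2 * \<epsilon>"
    and chi'_bd: "\<And>s. \<bar>chi' s\<bar> \<le> 1"
  shows "\<exists>\<delta>0>0. \<forall>(Tw :: real^3 \<Rightarrow> real) (P :: (real^3) set) (eta :: real^3 \<Rightarrow> real^3 \<Rightarrow> real^3) \<delta>1.
     ( (\<forall>x\<in>frontier {x. xi x < 0}. Tw x > 0)
     \<and> (\<exists>U. open U \<and> frontier {x. xi x < 0} \<subseteq> U \<and> C1_on U Tw)
     \<and> (\<forall>x\<in>frontier {x. xi x < 0}. \<bar>Tw x - T0\<bar> < \<delta>0)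
     \<and> \<delta>1 > 0 \<and> finite P \<and> P \<subseteq> frontier {x. xi x < 0}
     \<and> (\<forall>p\<in>P. eta p 0 = p
          \<and> (\<exists>V. open V \<and> half_cball \<delta>1 \<subseteq> V \<and> C2_on V (eta p))
          \<and> inj_on (eta p) (half_ball \<delta>1)
          \<and> eta p ` half_ball \<delta>1 \<subseteq> closure {x. xi x < 0}
          \<and> (\<forall>y\<in>half_ball \<delta>1. (eta p y \<in> frontier {x. xi x < 0} \<longleftrightarrow> y$3 = 0))
          \<and> (\<forall>y\<in>half_ball \<delta>1. y$3 = 0 \<longrightarrow>
               (\<forall>i j. i \<noteq> j \<longrightarrow>
                 frechet_derivative (eta p) (at y) (axis i 1) \<bullet> frechet_derivative (eta p) (at y) (axis j 1) = 0))))
     \<longrightarrow> (\<exists>C. \<forall>rperp rpar.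
           0 < rperp \<and> rperp \<le> 1 \<and> 0 < rpar \<and> rpar < 2
           \<and> max \<bar>1 - rperp\<bar> \<bar>1 - rpar\<bar> < \<delta>0
           \<longrightarrow> (\<forall>x1\<in>frontier {x. xi x < 0}. \<forall>v :: real^3.
                 ennreal (Acoef T0 rperp rpar (Tw x1) v) *
                   (\<integral>\<^sup>+ v1. ennreal ((1 + (norm v1)^2 + (norm v)^2)
                        * Bfun T0 rperp rpar (Tw x1) (nrm gxi x1) v v1)
                      * indicator {v1. nrm gxi x1 \<bullet> v1 > 0} v1 \<partial>lborel) \<le> ennreal C
               \<and> ennreal (Acoef T0 rperp rpar (Tw x1) v) *
                   (\<integral>\<^sup>+ v1. ennreal (Bfun T0 rperp rpar (Tw x1) (nrm gxi x1) v v1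
                        / kin_alpha chi xi gxi hxi x1 v1)
                      * indicator {v1. nrm gxi x1 \<bullet> v1 > 0} v1 \<partial>lborel) \<le> ennreal C
               \<and> ennreal (Acoef T0 rperp rpar (Tw x1) v) *
                   (\<integral>\<^sup>+ v1. ennreal ((1 + norm v1)
                        * onorm (frechet_derivative (Bfun T0 rperp rpar (Tw x1) (nrm gxi x1) v) (at v1)))
                      * indicator {v1. nrm gxi x1 \<bullet> v1 > 0} v1 \<partial>lborel) \<le> ennreal C
               \<and> (\<forall>p\<in>P. \<forall>y\<in>half_ball \<delta>1. \<forall>i\<in>{1,2}. \<forall>D.
                    y$3 = 0 \<and> eta p y = x1 \<and>
                    ((\<lambda>t. Acoef T0 rperp rpar (Tw (eta p (y + t *\<^sub>R axis i 1))) v)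
                       has_real_derivative D) (at 0)
                    \<longrightarrow> ennreal \<bar>D\<bar> *
                      (\<integral>\<^sup>+ v1. ennreal (Bfun T0 rperp rpar (Tw x1) (nrm gxi x1) v v1)
                         * indicator {v1. nrm gxi x1 \<bullet> v1 > 0} v1 \<partial>lborel) \<le> ennreal C)))"
proof -
  let ?F = "frontier {x. xi x < 0}"
  have xi_cont: "continuous_on UNIV xi" and gxi_cont: "continuous_on UNIV gxi"
    using xi_d1 xi_d2 by (auto intro!: continuous_at_imp_continuous_on has_derivative_continuous)
  have F: "compact ?F"
    using bdd by (rule compact_frontier_bounded)
  obtain g0 where g0: "0 < g0" "\<And>x. x \<in> ?F \<Longrightarrow> g0 \<le> norm (gxi x)"
    using compact_nonzero_norm_ge[OF F continuous_on_subset[OF gxi_cont]] grad_nz by blast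
  show ?thesis
  proof (rule exI[of _ "min (1 / 100) (T0 / 10)"], intro conjI allI impI, goal_cases)
    case 1
    show ?case using T0_pos by simp
  next
    case (2 Tw P eta \<delta>1)
    then have P: "finite P" and "\<exists>U. open U \<and> ?F \<subseteq> U \<and> C1_on U Tw"
      and charts: "\<forall>p\<in>P. \<exists>V. open V \<and> half_cball \<delta>1 \<subseteq> V \<and> C2_on V (eta p)"
      by (simp_all only: Ball_def) blast+
    then obtain U where U: "C1_on U Tw" "?F \<subseteq> U"
      by blast
    obtain K where K: "0 \<le> K"
      "\<And>p y e rperp rpar v D. p \<in> P \<Longrightarrow> y \<in> half_ball \<delta>1 \<Longrightarrow> eta p y \<in> ?F
        \<Longrightarrow> near_diffuse T0 (Tw (eta p y)) rperp rpar
        \<Longrightarrow> ((\<lambda>t. Acoef T0 rperp rpar (Tw (eta p (y + t *\<^sub>R e))) v) has_real_derivative D) (at 0)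
        \<Longrightarrow> \<bar>D\<bar> \<le> K * norm e * Acoef T0 rperp rpar (Tw (eta p y)) v * (1 + (norm v)\<^sup>2)"
      using tangential_Acoef_derivative_bound[OF F U P charts T0_pos] by blast
    define c where "c = 1 + (1 / g0 + 1 / \<epsilon>) + 2 * (1 + 13 / T0) + K"
    have c: "1 \<le> c" "1 / g0 + 1 / \<epsilon> \<le> c" "2 * (1 + 13 / T0) \<le> c" "K \<le> c"
      using g0 eps_pos T0_pos K unfolding c_def by auto
    show ?case
    proof (rule exI[of _ "c * kernel_const T0"], intro allI impI ballI, goal_cases)
      case (1 rperp rpar x1 v)
      have "gxi x1 \<noteq> 0" using g0 1(2) by force
      with 1 2 T0_pos interpret near_diffuse_normal T0 "Tw x1" rperp rpar "nrm gxi x1"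
        by (intro boundary_point_near_diffuse_normal) auto
      have alpha: "min (g0 * (nrm gxi x1 \<bullet> v1)) \<epsilon> \<le> kin_alpha chi xi gxi hxi x1 v1"
        if "0 < nrm gxi x1 \<bullet> v1" for v1
        using kin_alpha_boundary_ge[OF chi_mono chi_id] eps_pos g0 1(2) that
          frontier_sublevel_eq_zero[OF xi_cont] by auto
      have D: "\<bar>D\<bar> \<le> K * Acoef T0 rperp rpar (Tw x1) v * (1 + (norm v)\<^sup>2)"
        if "p \<in> P" "y \<in> half_ball \<delta>1" "y $ 3 = 0 \<and> eta p y = x1 \<and>
          ((\<lambda>t. Acoef T0 rperp rpar (Tw (eta p (y + t *\<^sub>R axis i 1))) v) has_real_derivative D) (at 0)"
        for p y i D
        using K(2)[where e = "axis i 1"] that 1(2) near_diffuse_axioms by auto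
      have "ennreal (kernel_const T0) \<le> ennreal (c * kernel_const T0)"
        using kernel_const_mono[of _ 1 c] c(1) by simp
      then show ?case
        using alpha D g0(1) eps_pos K(1)
        by (intro conjI ballI allI impI order_trans[OF Bfun_weighted_integral_le]
            kernel_const_mono[OF Bfun_div_integral_le c(2)]
            kernel_const_mono[OF Bfun_derivative_integral_le c(3)]
            kernel_const_mono[OF abs_mult_Bfun_integral_le c(4)]) auto
    qed
  qed
qed

end
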